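(* Let $n\ge 1$ and $\rho>1$, and let $E_\rho\subset\mathbb C$ be the open Bernstein ellipse (foci $\pm1$, semi-major plus semi-minor axis equal to $\rho$) with closure $\bar E_\rho$ and boundary $\partial E_\rho$. Let $A:\bar E_\rho\to\mathbb C^{n\times n}$ and $\boldsymbol b:\bar E_\rho\to\mathbb C^n$ be continuous on $\bar E_\rho$ and analytic on $E_\rho$, with $A(t)$ invertible for every $t\in\bar E_\rho$. Put $\boldsymbol x(t)=A(t)^{-1}\boldsymbol b(t)$ and $\kappa_\rho:=\max_{t\in\partial E_\rho}\|\boldsymbol x(t)\|_2$. Let $M\ge 2$, $\Delta t=2/(M-1)$, and consider the equispaced times $t_{i-M}=-1,\ t_{i-M+1}=-1+\Delta t,\ \dots,\ t_{i-1}=1$, and the next time $t_i=1+\Delta t$. Let $X=[\boldsymbol x(t_{i-M})\,|\,\cdots\,|\,\boldsymbol x(t_{i-1})]\in\mathbb C^{n\times M}$, $\mathcal S=\mathrm{span}(X)$, and let $$\boldsymbol s^*\in\operatorname{argmin}_{\boldsymbol s\in\mathcal S}\|A(t_i)\boldsymbol s-\boldsymbol b(t_i)\|_2.$$ Set $r=(t_i+\sqrt{t_i^2-1})/\rho$ and assume $r<1$. Then for every nonnegative integer $R\le\frac12\sqrt{M-1}$, $$\|A(t_i)\boldsymbol s^*-\boldsymbol b(t_i)\|_2\le 2\|A(t_i)\|_2\,\kappa_\rho\Big[\frac{1}{1-r}+\frac{C(M,R)\,\rho}{(\rho-1)\sqrt{\rho^2r^2-1}}\Big]r^{R+1},$$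 where $C(M,R)=5\sqrt5\,\sqrt{2R+1}\,\sqrt M/\sqrt{2(M-1)}$.
   Context: $\|\cdot\|_2$ denotes the Euclidean norm for vectors and the spectral norm for matrices. The vector $\boldsymbol s^*$ is the initial guess produced by minimizing the residual of the linear system at time $t_i$ over the span of the $M$ previous solutions. *)

theory Defs
  imports "HOL-Analysis.Analysis"
begin

text \<open>Open Bernstein ellipse: foci at -1 and 1, semi-major axis (rho + 1/rho)/2,
  i.e. semi-major plus semi-minor axis equal to rho.\<close>
definition bernstein_ellipse :: "real \<Rightarrow> complex set" where
  "bernstein_ellipse \<rho> = {z. cmod (z - 1) + cmod (z + 1) < \<rho> + 1 / \<rho>}"

definition bernstein_ellipse_closed :: "real \<Rightarrow> complex set" where
  "bernstein_ellipse_closed \<rho> = {z. cmod (z - 1) + cmod (z + 1) \<le> \<rho> + 1 / \<rho>}"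

definition bernstein_ellipse_boundary :: "real \<Rightarrow> complex set" where
  "bernstein_ellipse_boundary \<rho> = {z. cmod (z - 1) + cmod (z + 1) = \<rho> + 1 / \<rho>}"

definition spec_norm :: "complex^'n^'n \<Rightarrow> real" where
  "spec_norm A = onorm (\<lambda>v. A *v v)"

end

theory Submission
  imports Defs "HOL-Complex_Analysis.Complex_Analysis"
begin

(*
  Write t_i = J(sigma) for the Joukowski map J(w) = (w + 1/w)/2 and sigma = t_i + sqrt(t_i^2 - 1);
  J maps the circle |w| = rho onto the boundary of E_rho.

  Among the M equispaced times pick R + 1 Fekete points (maximal Vandermonde product). Their
  Lagrange basis polynomials are bounded by 1 on the grid; since 4 R^2 <= M - 1, a Taylor expansion
  at an interior maximum, with the second derivative bounded by Cauchy's estimate and Bernstein's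
  lemma, shows they are bounded by 3 on [-1, 1], and Bernstein's lemma again gives 3 sigma^R at t_i.
  The extrapolation weights c_k are thus exact for polynomials of degree <= R at t_i and have
  l1-norm at most 3 (R + 1) sigma^R.

  For a unit vector u the function u . x is analytic on E_rho. Cauchy's formula pulled back to the
  circle |w| = rho writes (u . x)(t_i) - sum_k c_k (u . x)(t_k) as a contour integral whose kernel,
  expanded in Chebyshev polynomials, loses all terms of degree <= R by exactness; the tails are
  geometric series in sigma/rho and 1/rho. Taking u dual to the error vector bounds
  |x(t_i) - sum_k c_k x(t_k)|, and as s* minimises the residual over the span of the x(t_k), its
  residual is at most |A(t_i)| times that error.
*)

section \<open>Chebyshev polynomials and the Joukowski map\<close>

fun cheb_poly :: "nat \<Rightarrow> real poly" where
  "cheb_poly 0 = 1"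
| "cheb_poly (Suc 0) = [:0, 1:]"
| "cheb_poly (Suc (Suc k)) = smult 2 ([:0, 1:] * cheb_poly (Suc k)) - cheb_poly k"

fun cheb :: "nat \<Rightarrow> complex \<Rightarrow> complex" where
  "cheb 0 z = 1"
| "cheb (Suc 0) z = z"
| "cheb (Suc (Suc k)) z = 2 * z * cheb (Suc k) z - cheb k z"

lemma degree_cheb_poly: "degree (cheb_poly k) \<le> k"
proof (induction k rule: cheb_poly.induct)
  case (3 k)
  have "degree (smult 2 ([:0, 1:] * cheb_poly (Suc k))) \<le> Suc (Suc k)"
    using 3(1) by (simp add: order_trans[OF degree_mult_le])
  moreover have "degree (cheb_poly k) \<le> Suc (Suc k)" using 3(2) by simp
  ultimately show ?case by (simp add: degree_diff_le)
qed auto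

lemma cheb_of_real: "cheb k (of_real x) = of_real (poly (cheb_poly k) x)"
  by (induction k rule: cheb_poly.induct) auto

definition joukowski :: "complex \<Rightarrow> complex" where
  "joukowski w = (w + 1/w) / 2"

lemma joukowski_of_real: "joukowski (of_real s) = of_real ((s + 1/s) / 2)"
  by (simp add: joukowski_def)

lemma joukowski_inverse: "joukowski (1/w) = joukowski w"
  by (simp add: joukowski_def add.commute)

lemma cheb_joukowski:
  assumes "u \<noteq> 0"
  shows "cheb k (joukowski u) = (u^k + (1/u)^k) / 2"
proof (induction k rule: cheb_poly.induct)
  case (3 k)
  define v where "v = 1/u"
  have uv: "u * v = 1" using assms by (simp add: v_def)
  have "cheb (Suc (Suc k)) (joukowski u)
      = (u * u^Suc k + (u * v) * v^k + (v * u) * u^k + v * v^Suc k - u^k - v^k) / 2"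
    using 3 by (simp add: joukowski_def v_def field_simps)
  also have "\<dots> = (u^Suc (Suc k) + v^Suc (Suc k)) / 2"
    using uv by (simp add: mult.commute)
  finally show ?case by (simp add: v_def)
qed (simp_all add: joukowski_def)

definition focal_sum :: "complex \<Rightarrow> real" where
  "focal_sum z = cmod (z - 1) + cmod (z + 1)"

lemma bernstein_ellipse_focal_sum: "bernstein_ellipse \<rho> = {z. focal_sum z < \<rho> + 1/\<rho>}"
  by (simp add: bernstein_ellipse_def focal_sum_def)

lemma bernstein_ellipse_closed_focal_sum:
  "bernstein_ellipse_closed \<rho> = {z. focal_sum z \<le> \<rho> + 1/\<rho>}"
  by (simp add: bernstein_ellipse_closed_def focal_sum_def)

lemma bernstein_ellipse_boundary_focal_sum:
  "bernstein_ellipse_boundary \<rho> = {z. focal_sum z = \<rho> + 1/\<rho>}"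
  by (simp add: bernstein_ellipse_boundary_def focal_sum_def)

lemma focal_sum_of_real: "focal_sum (of_real x) = \<bar>x - 1\<bar> + \<bar>x + 1\<bar>"
  unfolding focal_sum_def by (metis norm_of_real of_real_1 of_real_add of_real_diff)

lemma focal_sum_joukowski:
  assumes "w \<noteq> 0"
  shows "focal_sum (joukowski w) = cmod w + 1 / cmod w"
proof -
  have "joukowski w - 1 = (w - 1)^2 / (2*w)" and "joukowski w + 1 = (w + 1)^2 / (2*w)"
    using assms by (auto simp: joukowski_def field_simps power2_eq_square)
  then have "focal_sum (joukowski w) = ((cmod (w-1))^2 + (cmod (w+1))^2) / (2 * cmod w)"
    by (simp add: focal_sum_def norm_divide norm_power add_divide_distrib)
  also have "(cmod (w-1))^2 + (cmod (w+1))^2 = 2 * (cmod w)^2 + 2"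
    unfolding cmod_power2 by (simp add: power2_eq_square algebra_simps)
  finally show ?thesis using assms by (simp add: field_simps power2_eq_square)
qed

lemma plus_inverse_strict_mono:
  fixes a s :: real
  assumes "1 \<le> a" "a < s"
  shows "a + 1/a < s + 1/s"
proof -
  have "1 < a * s" using assms less_le_trans[OF _ mult_right_mono[of 1 a s]] by force
  then have "0 < (s - a) * (1 - 1/(a * s))" using assms by simp
  also have "(s - a) * (1 - 1/(a * s)) = s + 1/s - (a + 1/a)"
    using assms by (simp add: field_simps)
  finally show ?thesis by simp
qed

lemma plus_inverse_le_imp_le:
  fixes a s :: real
  assumes "1 \<le> a" "1 \<le> s" "a + 1/a \<le> s + 1/s"
  shows "a \<le> s"
  using plus_inverse_strict_mono[of s a] assms by linarith

lemma joukowski_surj_outside_disc: "\<exists>w. 1 \<le> cmod w \<and> joukowski w = z"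
proof -
  define c where "c = csqrt (z^2 - 1)"
  have prod: "(z + c) * (z - c) = 1"
    by (simp add: c_def algebra_simps power2_eq_square[symmetric])
  then have "z + c \<noteq> 0" "z - c \<noteq> 0" by auto
  then have "1/(z + c) = z - c" "1/(z - c) = z + c"
    using prod by (simp_all add: field_simps)
  then have J: "joukowski (z + c) = z" "joukowski (z - c) = z"
    by (simp_all add: joukowski_def)
  have "cmod (z + c) * cmod (z - c) = 1" using prod by (metis norm_mult norm_one)
  then have "1 \<le> cmod (z + c) \<or> 1 \<le> cmod (z - c)"
    using mult_strict_mono[of "cmod (z + c)" 1 "cmod (z - c)" 1] by force
  then show ?thesis using J by blast
qed

lemma poly_as_sum:
  fixes q :: "'a::{comm_semiring_0,semiring_1} poly"
  assumes "degree q \<le> R"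
  shows "poly q z = (\<Sum>k\<le>R. coeff q k * z^k)"
  unfolding poly_altdef
  by (rule sum.mono_neutral_left) (use assms in \<open>auto simp: coeff_eq_0\<close>)

lemma poly_bound_joukowski:
  fixes p :: "complex poly"
  assumes deg: "degree p \<le> R"
    and bnd: "\<And>x::real. -1 \<le> x \<Longrightarrow> x \<le> 1 \<Longrightarrow> cmod (poly p (of_real x)) \<le> N"
    and w: "1 \<le> cmod w"
  shows "cmod (poly p (joukowski w)) \<le> N * cmod w ^ R"
proof -
  \<comment> \<open>\<open>v^R p(J(1/v))\<close> is a polynomial in \<open>v\<close>; on \<open>|v| = 1\<close> the point \<open>J(1/v) = Re v\<close>
    is real.\<close>
  define Q where "Q v = (\<Sum>k\<le>R. coeff p k * (v^(R-k) * ((1 + v^2)/2)^k))" for v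
  have Q_eq: "Q v = v^R * poly p (joukowski (1/v))" if "v \<noteq> 0" for v
  proof -
    have "v^(R-k) * ((1 + v^2)/2)^k = v^R * (joukowski (1/v))^k" if "k \<le> R" for k
    proof -
      have "(1 + v^2)/2 = v * joukowski (1/v)"
        using \<open>v \<noteq> 0\<close> by (simp add: joukowski_def field_simps power2_eq_square)
      then show ?thesis
        using that by (simp add: power_mult_distrib mult.assoc power_add[symmetric])
    qed
    then show ?thesis
      unfolding Q_def poly_as_sum[OF deg] by (simp add: sum_distrib_left algebra_simps)
  qed
  have Q_holo: "Q holomorphic_on UNIV"
    unfolding Q_def by (intro holomorphic_intros) auto
  have Q_bound: "cmod (Q v) \<le> N" if "v \<in> cball 0 1" for v
  proof (rule maximum_modulus_frontier[where S = "cball 0 1" and f = Q])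
    show "Q holomorphic_on interior (cball 0 1)" "continuous_on (closure (cball 0 1)) Q"
      using Q_holo holomorphic_on_subset holomorphic_on_imp_continuous_on by blast+
  next
    fix z :: complex assume "z \<in> frontier (cball 0 1)"
    then have z1: "cmod z = 1" by (simp add: frontier_cball)
    then have "1/z = cnj z" by (simp add: complex_div_cnj[of 1 z])
    then have "joukowski (1/z) = of_real (Re z)"
      by (simp add: joukowski_def complex_eq_iff)
    moreover have "-1 \<le> Re z" "Re z \<le> 1" using abs_Re_le_cmod[of z] z1 by auto
    moreover have "z \<noteq> 0" using z1 by auto
    ultimately show "cmod (Q z) \<le> N"
      using Q_eq[of z] z1 bnd by (simp add: norm_mult norm_power)
  qed (use that in auto)
  have "cmod (1/w) \<le> 1" using w by (simp add: norm_divide divide_le_eq)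
  then have "cmod (Q (1/w)) \<le> N" using Q_bound by simp
  then have "cmod (poly p (joukowski w)) / cmod w ^ R \<le> N"
  proof -
    have "w \<noteq> 0" using w by auto
    then show ?thesis
      using Q_eq[of "1/w"] \<open>cmod (Q (1/w)) \<le> N\<close>
      by (simp add: norm_mult norm_divide norm_power power_one_over joukowski_inverse)
  qed
  moreover have "0 < cmod w ^ R" using w by (intro zero_less_power) linarith
  ultimately show ?thesis by (simp add: divide_le_eq)
qed

lemma bernstein_ellipse_poly_bound:
  fixes p :: "complex poly"
  assumes deg: "degree p \<le> R"
    and bnd: "\<And>x::real. -1 \<le> x \<Longrightarrow> x \<le> 1 \<Longrightarrow> cmod (poly p (of_real x)) \<le> N"
    and s: "1 \<le> s" and z: "focal_sum z \<le> s + 1/s"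
  shows "cmod (poly p z) \<le> N * s ^ R"
proof -
  obtain w where w: "1 \<le> cmod w" "joukowski w = z" using joukowski_surj_outside_disc by blast
  then have "cmod w + 1/cmod w \<le> s + 1/s" using focal_sum_joukowski[of w] z by force
  then have "cmod w \<le> s" using plus_inverse_le_imp_le w(1) s by blast
  moreover have "0 \<le> N" using order_trans[OF norm_ge_zero bnd[of 0]] by simp
  ultimately have "N * cmod w ^ R \<le> N * s ^ R"
    by (intro mult_left_mono power_mono) auto
  then show ?thesis using poly_bound_joukowski[OF deg bnd w(1)] w(2) by simp
qed

section \<open>Geometry of Bernstein ellipses\<close>

lemma convex_on_focal_sum: "convex_on UNIV focal_sum"
proof -
  have "convex_on UNIV (\<lambda>z::complex. dist 1 z + dist (-1) z)"
    by (intro convex_on_add convex_on_dist convex_UNIV)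
  also have "(\<lambda>z. dist 1 z + dist (-1) z) = focal_sum"
    by (auto simp: focal_sum_def dist_norm norm_minus_commute)
  finally show ?thesis .
qed

lemma convex_bernstein_ellipse_closed: "convex (bernstein_ellipse_closed \<rho>)"
  unfolding bernstein_ellipse_closed_focal_sum convex_alt
proof (intro ballI allI impI, simp)
  fix x y :: complex and u :: real
  assume "focal_sum x \<le> \<rho> + 1/\<rho>" "focal_sum y \<le> \<rho> + 1/\<rho>" "0 \<le> u \<and> u \<le> 1"
  moreover have "focal_sum ((1 - u) *\<^sub>R x + u *\<^sub>R y) \<le> max (focal_sum x) (focal_sum y)"
    by (rule convex_lower[OF convex_on_focal_sum]) (use calculation in auto)
  ultimately show "focal_sum ((1 - u) *\<^sub>R x + u *\<^sub>R y) \<le> \<rho> + 1/\<rho>" by linarith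
qed

lemma open_bernstein_ellipse: "open (bernstein_ellipse \<rho>)"
  unfolding bernstein_ellipse_focal_sum focal_sum_def by (intro open_Collect_less continuous_intros)

lemma compact_bernstein_ellipse_boundary: "compact (bernstein_ellipse_boundary \<rho>)"
proof (rule compact_eq_bounded_closed[THEN iffD2], rule conjI)
  show "closed (bernstein_ellipse_boundary \<rho>)"
    unfolding bernstein_ellipse_boundary_focal_sum focal_sum_def
    by (intro closed_Collect_eq continuous_intros)
  have "cmod z \<le> \<rho> + 1/\<rho>" if "z \<in> bernstein_ellipse_boundary \<rho>" for z
  proof -
    have "2 * cmod z \<le> \<rho> + 1/\<rho>"
      using that norm_triangle_ineq[of "z - 1" "z + 1"]
      by (simp add: bernstein_ellipse_boundary_focal_sum focal_sum_def)
    then show ?thesis using norm_ge_zero[of z] by linarith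
  qed
  then show "bounded (bernstein_ellipse_boundary \<rho>)"
    by (auto simp: bounded_iff)
qed

lemma bernstein_ellipse_subset_closed: "bernstein_ellipse \<rho> \<subseteq> bernstein_ellipse_closed \<rho>"
  unfolding bernstein_ellipse_focal_sum bernstein_ellipse_closed_focal_sum by auto

lemma bernstein_ellipse_boundary_subset_closed:
  "bernstein_ellipse_boundary \<rho> \<subseteq> bernstein_ellipse_closed \<rho>"
  unfolding bernstein_ellipse_boundary_focal_sum bernstein_ellipse_closed_focal_sum by auto

lemma two_less_plus_inverse: "1 < (\<rho>::real) \<Longrightarrow> 2 < \<rho> + 1/\<rho>"
  using plus_inverse_strict_mono[of 1 \<rho>] by simp

lemma interior_bernstein_ellipse_closed:
  assumes "1 < \<rho>"
  shows "interior (bernstein_ellipse_closed \<rho>) \<subseteq> bernstein_ellipse \<rho>"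
proof
  fix z assume z: "z \<in> interior (bernstein_ellipse_closed \<rho>)"
  define c where "c = \<rho> + 1/\<rho>"
  have c2: "2 < c" using two_less_plus_inverse[OF assms] by (simp add: c_def)
  obtain e where e: "e > 0" "ball z e \<subseteq> bernstein_ellipse_closed \<rho>"
    using z by (meson mem_interior)
  show "z \<in> bernstein_ellipse \<rho>"
  proof (rule ccontr)
    assume "z \<notin> bernstein_ellipse \<rho>"
    then have zc: "focal_sum z = c"
      using z interior_subset[of "bernstein_ellipse_closed \<rho>"]
      by (force simp: bernstein_ellipse_focal_sum bernstein_ellipse_closed_focal_sum c_def)
    then have "z \<noteq> 0" using c2 by (auto simp: focal_sum_def)
    \<comment> \<open>Push \<open>z\<close> slightly outwards; convexity along the segment from \<open>0\<close>, where the focal sum is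
      \<open>2 < c\<close>, then forces \<open>focal_sum z < c\<close>.\<close>
    define a where "a = e / (2 * cmod z)"
    have a0: "a > 0" using e \<open>z \<noteq> 0\<close> by (simp add: a_def)
    have "dist z ((1 + a) *\<^sub>R z) = a * cmod z" using a0 by (simp add: dist_norm algebra_simps)
    also have "\<dots> < e" using e \<open>z \<noteq> 0\<close> by (simp add: a_def)
    finally have "focal_sum ((1 + a) *\<^sub>R z) \<le> c"
      using e by (auto simp: bernstein_ellipse_closed_focal_sum c_def)
    then have "(1/(1+a)) * focal_sum ((1 + a) *\<^sub>R z) \<le> (1/(1+a)) * c"
      using a0 by (intro mult_left_mono) auto
    moreover have "z = (1 - 1/(1+a)) *\<^sub>R 0 + (1/(1+a)) *\<^sub>R ((1 + a) *\<^sub>R z)" using a0 by simp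
    then have "focal_sum z \<le> (1 - 1/(1+a)) * 2 + (1/(1+a)) * focal_sum ((1 + a) *\<^sub>R z)"
      using convex_onD[OF convex_on_focal_sum, of "1/(1+a)" 0 "(1 + a) *\<^sub>R z"] a0
      by (simp add: focal_sum_def[of 0])
    ultimately have "focal_sum z \<le> (1 - 1/(1+a)) * 2 + (1/(1+a)) * c" by linarith
    also have "\<dots> = c - (a/(1+a)) * (c - 2)"
      using a0 by (simp add: divide_simps) (simp add: algebra_simps)
    also have "\<dots> < c" using a0 c2 by simp
    finally show False using zc by simp
  qed
qed

lemma joukowski_circle_in_boundary:
  "0 < \<rho> \<Longrightarrow> cmod w = \<rho> \<Longrightarrow> joukowski w \<in> bernstein_ellipse_boundary \<rho>"
  using focal_sum_joukowski[of w] by (auto simp: bernstein_ellipse_boundary_focal_sum)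

lemma joukowski_in_bernstein_ellipse:
  assumes "u \<noteq> 0" "cmod u < \<rho>" "cmod (1/u) < \<rho>"
  shows "joukowski u \<in> bernstein_ellipse \<rho>"
proof -
  define a where "a = max (cmod u) (1 / cmod u)"
  have "1 \<le> a"
    using assms(1) by (cases "1 \<le> cmod u") (auto simp: a_def le_max_iff_disj le_divide_eq)
  moreover have "a < \<rho>" using assms by (simp add: a_def norm_divide)
  moreover have "a + 1/a = cmod u + 1 / cmod u" by (auto simp: a_def max_def)
  ultimately have "cmod u + 1 / cmod u < \<rho> + 1/\<rho>" using plus_inverse_strict_mono by metis
  then show ?thesis using focal_sum_joukowski[OF assms(1)] by (simp add: bernstein_ellipse_focal_sum)
qed

section \<open>Cauchy's formula on the Joukowski circle\<close>

lemma joukowski_has_field_derivative: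
  "w \<noteq> 0 \<Longrightarrow> (joukowski has_field_derivative (1 - 1/w^2)/2) (at w)"
  unfolding joukowski_def[abs_def]
  by (rule derivative_eq_intros refl | simp add: field_simps power2_eq_square)+

lemma holomorphic_joukowski: "joukowski holomorphic_on (- {0})"
  unfolding joukowski_def[abs_def] by (intro holomorphic_intros) auto

text \<open>Cauchy's integrand \<open>f(z)/(z - t) dz\<close> pulled back along \<open>z = J(w)\<close>;
  \<open>(1 - 1/w\<^sup>2)/2 = J'(w)\<close>.\<close>
definition joukowski_kernel :: "(complex \<Rightarrow> complex) \<Rightarrow> complex \<Rightarrow> complex \<Rightarrow> complex" where
  "joukowski_kernel f t w = f (joukowski w) * (((1 - 1/w^2)/2) / (joukowski w - t))"

lemma joukowski_partial_fractions:
  fixes u w :: complex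
  assumes u: "u \<noteq> 0" and w: "w \<noteq> 0" "w \<noteq> u" "w \<noteq> 1/u"
  shows "((1 - 1/w^2)/2) / (joukowski w - joukowski u) = -1/w + 1/(w - u) + 1/(w - 1/u)"
proof -
  define v where "v = 1/u"
  have uv: "u * v = 1" using u by (simp add: v_def)
  have nz: "w - u \<noteq> 0" "w - v \<noteq> 0" using w by (auto simp: v_def)
  have e1: "joukowski w - joukowski u = (w - u) * (w - v) / (2*w)"
    using w(1) uv u by (simp add: joukowski_def v_def field_simps)
  have e2: "(1 - 1/w^2)/2 = (w^2 - 1) / (2*w^2)" using w(1) by (simp add: field_simps)
  have "((1 - 1/w^2)/2) / (joukowski w - joukowski u) = (w^2 - 1) / (w * ((w - u) * (w - v)))"
  proof -
    have gen: "\<And>X Y. Y \<noteq> 0 \<Longrightarrow> (X/(2*w^2))/(Y/(2*w)) = X/(w*Y)"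
      using w(1) by (simp add: field_simps power2_eq_square)
    show ?thesis unfolding e1 e2 by (rule gen) (use nz in simp)
  qed
  also have "\<dots> = -1/w + 1/(w - u) + 1/(w - v)"
  proof -
    have "w^2 - 1 = -((w-u)*(w-v)) + w*(w-v) + w*(w-u)"
      using uv by (simp add: algebra_simps power2_eq_square)
    then show ?thesis using w(1) nz by (simp add: field_simps)
  qed
  finally show ?thesis by (simp add: v_def)
qed

lemma joukowski_circle_change_of_variables:
  fixes f :: "complex \<Rightarrow> complex"
  assumes rho: "0 < \<rho>"
    and contf: "continuous_on (bernstein_ellipse_closed \<rho>) f"
    and t: "t \<notin> bernstein_ellipse_boundary \<rho>"
  shows "contour_integral (joukowski \<circ> circlepath 0 \<rho>) (\<lambda>z. f z / (z - t))
      = contour_integral (circlepath 0 \<rho>) (joukowski_kernel f t)"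
    and "joukowski_kernel f t contour_integrable_on (circlepath 0 \<rho>)"
proof -
  have circle: "path_image (circlepath 0 \<rho>) = sphere 0 \<rho>" using rho by simp
  have circle0: "path_image (circlepath 0 \<rho>) \<subseteq> - {0}" using rho by auto
  have J: "joukowski w \<in> bernstein_ellipse_boundary \<rho>" if "w \<in> sphere 0 \<rho>" for w
    using that rho by (intro joukowski_circle_in_boundary) auto
  have "joukowski analytic_on (- {0})"
    using holomorphic_joukowski by (simp add: analytic_on_open open_Compl)
  then have "contour_integral (joukowski \<circ> circlepath 0 \<rho>) (\<lambda>z. f z / (z - t))
      = contour_integral (circlepath 0 \<rho>)
          (\<lambda>w. deriv joukowski w * (f (joukowski w) / (joukowski w - t)))"
    by (rule contour_integral_comp_analyticW[OF _ valid_path_circlepath circle0])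
  also have "\<dots> = contour_integral (circlepath 0 \<rho>) (joukowski_kernel f t)"
  proof (rule contour_integral_eq)
    fix w assume "w \<in> path_image (circlepath 0 \<rho>)"
    then have "w \<noteq> 0" using circle0 by auto
    then show "deriv joukowski w * (f (joukowski w) / (joukowski w - t)) = joukowski_kernel f t w"
      by (simp add: DERIV_imp_deriv[OF joukowski_has_field_derivative] joukowski_kernel_def)
  qed
  finally show "contour_integral (joukowski \<circ> circlepath 0 \<rho>) (\<lambda>z. f z / (z - t))
      = contour_integral (circlepath 0 \<rho>) (joukowski_kernel f t)" .
  show "joukowski_kernel f t contour_integrable_on (circlepath 0 \<rho>)"
  proof (rule contour_integrable_continuous_circlepath)
    have cJ: "continuous_on (sphere 0 \<rho>) joukowski"
      using holomorphic_joukowski holomorphic_on_imp_continuous_on continuous_on_subset circle0 circle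
      by metis
    have "continuous_on (sphere 0 \<rho>) (\<lambda>w. f (joukowski w))"
      using J bernstein_ellipse_boundary_subset_closed[of \<rho>]
      by (intro continuous_on_compose2[OF contf cJ]) blast
    moreover have "joukowski w - t \<noteq> 0" if "w \<in> sphere 0 \<rho>" for w using J[OF that] t by auto
    ultimately show "continuous_on (path_image (circlepath 0 \<rho>)) (joukowski_kernel f t)"
      unfolding circle joukowski_kernel_def using rho by (intro continuous_intros cJ) auto
  qed
qed

lemma cauchy_formula_joukowski_winding:
  fixes f :: "complex \<Rightarrow> complex"
  assumes rho: "1 < \<rho>"
    and contf: "continuous_on (bernstein_ellipse_closed \<rho>) f"
    and holf: "f holomorphic_on bernstein_ellipse \<rho>"
    and t: "t \<in> bernstein_ellipse \<rho>"
  shows "(joukowski_kernel f t has_contour_integral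
            2 * pi * \<i> * winding_number (joukowski \<circ> circlepath 0 \<rho>) t * f t) (circlepath 0 \<rho>)"
proof -
  define S where "S = bernstein_ellipse_closed \<rho>"
  define \<gamma> where "\<gamma> = joukowski \<circ> circlepath 0 \<rho>"
  have t_notin: "t \<notin> bernstein_ellipse_boundary \<rho>"
    using t by (auto simp: bernstein_ellipse_focal_sum bernstein_ellipse_boundary_focal_sum)
  have vp: "valid_path \<gamma>"
    unfolding \<gamma>_def using holomorphic_joukowski rho
    by (intro valid_path_compose_holomorphic[OF valid_path_circlepath]) (auto simp: open_Compl)
  have "path_image \<gamma> \<subseteq> bernstein_ellipse_boundary \<rho>"
    unfolding \<gamma>_def path_image_compose using rho joukowski_circle_in_boundary by auto
  then have pim: "path_image \<gamma> \<subseteq> S - {t}"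
    unfolding S_def using bernstein_ellipse_boundary_subset_closed[of \<rho>] t_notin by blast
  have loop: "pathfinish \<gamma> = pathstart \<gamma>"
    by (simp add: \<gamma>_def pathfinish_compose pathstart_compose)
  have tint: "t \<in> interior S"
    using t open_bernstein_ellipse bernstein_ellipse_subset_closed interior_maximal
    unfolding S_def by blast
  have fd: "f field_differentiable at x" if "x \<in> interior S - {}" for x
    using that interior_bernstein_ellipse_closed[OF rho] holf open_bernstein_ellipse
      holomorphic_on_imp_differentiable_at unfolding S_def by blast
  have "((\<lambda>z. f z / (z - t)) has_contour_integral 2 * pi * \<i> * winding_number \<gamma> t * f t) \<gamma>"
    by (rule Cauchy_integral_formula_convex[OF convex_bernstein_ellipse_closed[of \<rho>, folded S_def]
        finite.emptyI contf[folded S_def] fd tint vp pim loop])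
  then show ?thesis
    using joukowski_circle_change_of_variables[OF _ contf t_notin] rho
      has_contour_integral_integral contour_integral_unique unfolding \<gamma>_def
    by (metis less_trans zero_less_one)
qed

text \<open>The winding number is read off from the kernel of the constant function \<open>1\<close>, whose partial
  fractions have their poles \<open>0\<close>, \<open>u\<close>, \<open>1/u\<close> inside the circle.\<close>
lemma winding_number_joukowski_circle:
  assumes rho: "1 < \<rho>" and u: "u \<noteq> 0" "cmod u < \<rho>" "cmod (1/u) < \<rho>"
  shows "winding_number (joukowski \<circ> circlepath 0 \<rho>) (joukowski u) = 1"
proof -
  have pole: "((\<lambda>w. 1 / (w - a)) has_contour_integral (2 * pi * \<i>)) (circlepath 0 \<rho>)"
    if "cmod a < \<rho>" for a
    using Cauchy_integral_circlepath_simple[of "\<lambda>_. 1" 0 \<rho> a] that by simp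
  have "((\<lambda>w. -(1 / (w - 0)) + 1/(w - u) + 1/(w - 1/u)) has_contour_integral
          (-(2*pi*\<i>) + 2*pi*\<i> + 2*pi*\<i>)) (circlepath 0 \<rho>)"
    by (intro has_contour_integral_add has_contour_integral_neg pole) (use rho u in auto)
  then have partial: "((\<lambda>w. -(1 / (w - 0)) + 1/(w - u) + 1/(w - 1/u)) has_contour_integral
      (2*pi*\<i>)) (circlepath 0 \<rho>)"
    by simp
  have "(joukowski_kernel (\<lambda>_. 1) (joukowski u) has_contour_integral (2*pi*\<i>)) (circlepath 0 \<rho>)"
  proof (rule has_contour_integral_eq[OF partial])
    fix w assume "w \<in> path_image (circlepath 0 \<rho>)"
    then have "w \<noteq> 0" "w \<noteq> u" "w \<noteq> 1/u" using rho u by auto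
    then show "- (1 / (w - 0)) + 1 / (w - u) + 1 / (w - 1 / u)
        = joukowski_kernel (\<lambda>_. 1) (joukowski u) w"
      unfolding joukowski_kernel_def using joukowski_partial_fractions[OF u(1)] by simp
  qed
  moreover have "(joukowski_kernel (\<lambda>_. 1) (joukowski u) has_contour_integral
      2 * pi * \<i> * winding_number (joukowski \<circ> circlepath 0 \<rho>) (joukowski u)) (circlepath 0 \<rho>)"
    using cauchy_formula_joukowski_winding[OF rho continuous_on_const[where c=1]
        holomorphic_on_const[where c=1]
        joukowski_in_bernstein_ellipse[OF u]] by simp
  ultimately have "2*pi*\<i> = 2 * pi * \<i> * winding_number (joukowski \<circ> circlepath 0 \<rho>) (joukowski u)"
    by (rule has_contour_integral_unique)
  then show ?thesis by simp
qed

lemma cauchy_formula_joukowski: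
  fixes f :: "complex \<Rightarrow> complex"
  assumes rho: "1 < \<rho>"
    and contf: "continuous_on (bernstein_ellipse_closed \<rho>) f"
    and holf: "f holomorphic_on bernstein_ellipse \<rho>"
    and u: "u \<noteq> 0" "cmod u < \<rho>" "cmod (1/u) < \<rho>"
  shows "(joukowski_kernel f (joukowski u) has_contour_integral (2 * pi * \<i> * f (joukowski u)))
           (circlepath 0 \<rho>)"
  using cauchy_formula_joukowski_winding[OF rho contf holf joukowski_in_bernstein_ellipse[OF u]]
  by (simp add: winding_number_joukowski_circle[OF rho u])

section \<open>Quadrature error for analytic functions\<close>

lemma geometric_sum_split:
  fixes w a :: complex
  assumes "w \<noteq> 0" "w \<noteq> a"
  shows "1/(w - a) = (\<Sum>k\<le>R. a^k / w^(Suc k)) + a^(Suc R) / (w^(Suc R) * (w - a))"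
proof (induction R)
  case 0
  show ?case using assms by (simp add: field_simps)
next
  case (Suc R)
  have "a^Suc R / (w^Suc R * (w - a))
      = a^Suc R / w^Suc (Suc R) + a^Suc (Suc R) / (w^Suc (Suc R) * (w - a))"
    using assms by (simp add: field_simps)
  then show ?case using Suc by (simp add: add.assoc)
qed

text \<open>For \<open>t = J(u)\<close>, \<open>kernel_head R t\<close> and \<open>kernel_tail R u\<close> are the terms of degree \<open>\<le> R\<close>
  and the remainder of the Chebyshev expansion of the pulled-back Cauchy kernel.\<close>
definition kernel_head :: "nat \<Rightarrow> complex \<Rightarrow> complex \<Rightarrow> complex" where
  "kernel_head R t w = -1/w + (\<Sum>k\<le>R. 2 * cheb k t / w^(Suc k))"

definition kernel_tail :: "nat \<Rightarrow> complex \<Rightarrow> complex \<Rightarrow> complex" where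
  "kernel_tail R u w = u^(Suc R) / (w^(Suc R) * (w - u)) + (1/u)^(Suc R) / (w^(Suc R) * (w - 1/u))"

lemma joukowski_kernel_expansion:
  fixes u w :: complex
  assumes u: "u \<noteq> 0" and w: "w \<noteq> 0" "w \<noteq> u" "w \<noteq> 1/u"
  shows "((1 - 1/w^2)/2) / (joukowski w - joukowski u)
    = kernel_head R (joukowski u) w + kernel_tail R u w"
proof -
  have "kernel_head R (joukowski u) w
      = -1/w + (\<Sum>k\<le>R. u^k / w^(Suc k)) + (\<Sum>k\<le>R. (1/u)^k / w^(Suc k))"
    unfolding kernel_head_def cheb_joukowski[OF u]
    by (simp add: sum.distrib[symmetric] add_divide_distrib)
  then show ?thesis
    unfolding joukowski_partial_fractions[OF assms] kernel_tail_def
    using geometric_sum_split[OF w(1) w(2), of R] geometric_sum_split[OF w(1) w(3), of R]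
    by simp
qed

lemma kernel_head_exact:
  fixes c z :: "'a \<Rightarrow> complex"
  assumes exact: "\<And>k. k \<le> R \<Longrightarrow> (\<Sum>x\<in>S. c x * cheb k (z x)) = cheb k t"
  shows "(\<Sum>x\<in>S. c x * kernel_head R (z x) w) = kernel_head R t w"
proof -
  have head: "kernel_head R t' w = - cheb 0 t' / w + (\<Sum>k\<le>R. 2 * cheb k t' / w^(Suc k))" for t'
    by (simp add: kernel_head_def)
  have "(\<Sum>x\<in>S. c x * kernel_head R (z x) w)
      = (\<Sum>x\<in>S. - (c x * cheb 0 (z x)) / w + (\<Sum>k\<le>R. 2 * (c x * cheb k (z x)) / w^(Suc k)))"
    unfolding head by (intro sum.cong refl) (simp add: sum_distrib_left algebra_simps)
  also have "\<dots> = - (\<Sum>x\<in>S. c x * cheb 0 (z x)) / w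
      + (\<Sum>k\<le>R. 2 * (\<Sum>x\<in>S. c x * cheb k (z x)) / w^(Suc k))"
    by (simp add: sum.distrib sum_divide_distrib sum_negf sum_subtractf sum_distrib_left
        sum.swap[of _ S])
  also have "\<dots> = kernel_head R t w"
  proof -
    have "(\<Sum>k\<le>R. 2 * (\<Sum>x\<in>S. c x * cheb k (z x)) / w^(Suc k)) = (\<Sum>k\<le>R. 2 * cheb k t / w^(Suc k))"
      by (rule sum.cong) (auto simp: exact)
    then show ?thesis unfolding head using exact[of 0] by simp
  qed
  finally show ?thesis .
qed

lemma norm_geometric_tail_le:
  fixes z w :: complex
  assumes w: "cmod w = \<rho>" and z: "cmod z \<le> a" and a: "a < \<rho>"
  shows "cmod (z^n / (w^n * (w - z))) \<le> a^n / (\<rho>^n * (\<rho> - a))"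
proof -
  have "\<rho> - a \<le> cmod (w - z)" using norm_triangle_ineq2[of w z] w z by simp
  moreover have "0 < \<rho> - a" "0 \<le> a" using a z norm_ge_zero[of z] by linarith+
  ultimately have "cmod z ^ n / (\<rho>^n * cmod (w - z)) \<le> a^n / (\<rho>^n * (\<rho> - a))"
    using z by (intro frac_le power_mono mult_left_mono mult_pos_pos) auto
  then show ?thesis using w by (simp add: norm_divide norm_mult norm_power)
qed

lemma norm_kernel_tail_le:
  fixes u w :: complex
  assumes w: "cmod w = \<rho>" and u: "cmod u \<le> a" "cmod (1/u) \<le> a" and a: "a < \<rho>"
  shows "cmod (kernel_tail R u w) \<le> 2 * (a^Suc R / (\<rho>^Suc R * (\<rho> - a)))"
  unfolding kernel_tail_def
  using norm_triangle_ineq[of "u^Suc R / (w^Suc R * (w - u))" "(1/u)^Suc R / (w^Suc R * (w - 1/u))"]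
    norm_geometric_tail_le[OF w u(1) a, of "Suc R"] norm_geometric_tail_le[OF w u(2) a, of "Suc R"]
  by linarith

lemma joukowski_kernel_quadrature_bound:
  fixes c :: "'a \<Rightarrow> complex" and v :: "'a \<Rightarrow> complex"
  assumes w: "cmod w = \<rho>" and rho: "1 < \<rho>" and f: "cmod (f (joukowski w)) \<le> \<kappa>"
    and u: "u \<noteq> 0" "cmod u \<le> a" "cmod (1/u) \<le> a" and a: "a < \<rho>"
    and v: "\<And>x. x \<in> S \<Longrightarrow> cmod (v x) = 1"
    and exact: "\<And>k. k \<le> R \<Longrightarrow> (\<Sum>x\<in>S. c x * cheb k (joukowski (v x))) = cheb k (joukowski u)"
  shows "cmod (joukowski_kernel f (joukowski u) w
      - (\<Sum>x\<in>S. c x * joukowski_kernel f (joukowski (v x)) w))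
    \<le> \<kappa> * (2 * (a^Suc R / (\<rho>^Suc R * (\<rho> - a))) + (\<Sum>x\<in>S. cmod (c x)) * (2 / (\<rho>^Suc R * (\<rho> - 1))))"
proof -
  have expand: "joukowski_kernel f (joukowski z) w
      = f (joukowski w) * (kernel_head R (joukowski z) w + kernel_tail R z w)"
    if "z \<noteq> 0" "cmod z < \<rho>" "cmod (1/z) < \<rho>" for z
  proof -
    have "w \<noteq> 0" "w \<noteq> z" "w \<noteq> 1/z" using that w rho by auto
    then show ?thesis
      unfolding joukowski_kernel_def using joukowski_kernel_expansion[OF that(1)] by simp
  qed
  have v': "v x \<noteq> 0" "cmod (v x) < \<rho>" "cmod (1 / v x) < \<rho>" if "x \<in> S" for x
    using v[OF that] rho by (auto simp: norm_divide)
  have "joukowski_kernel f (joukowski u) w - (\<Sum>x\<in>S. c x * joukowski_kernel f (joukowski (v x)) w)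
      = f (joukowski w) * (kernel_head R (joukowski u) w
          - (\<Sum>x\<in>S. c x * kernel_head R (joukowski (v x)) w)
          + (kernel_tail R u w - (\<Sum>x\<in>S. c x * kernel_tail R (v x) w)))"
    using expand[OF u(1)] expand[OF v'] u a
    by (simp add: sum_distrib_left sum.distrib algebra_simps cong: sum.cong)
  also have "\<dots> = f (joukowski w) * (kernel_tail R u w - (\<Sum>x\<in>S. c x * kernel_tail R (v x) w))"
    using kernel_head_exact[where z="\<lambda>x. joukowski (v x)", OF exact] by simp
  finally have eq: "joukowski_kernel f (joukowski u) w
      - (\<Sum>x\<in>S. c x * joukowski_kernel f (joukowski (v x)) w)
      = f (joukowski w) * (kernel_tail R u w - (\<Sum>x\<in>S. c x * kernel_tail R (v x) w))" .
  have "cmod (kernel_tail R u w - (\<Sum>x\<in>S. c x * kernel_tail R (v x) w))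
      \<le> cmod (kernel_tail R u w) + (\<Sum>x\<in>S. cmod (c x) * cmod (kernel_tail R (v x) w))"
    using norm_triangle_ineq4 norm_sum[of "\<lambda>x. c x * kernel_tail R (v x) w" S]
    by (smt (verit) norm_mult sum.cong)
  also have "\<dots> \<le> 2 * (a^Suc R / (\<rho>^Suc R * (\<rho> - a))) + (\<Sum>x\<in>S. cmod (c x) * (2 / (\<rho>^Suc R * (\<rho> - 1))))"
  proof (intro add_mono sum_mono mult_left_mono)
    show "cmod (kernel_tail R u w) \<le> 2 * (a^Suc R / (\<rho>^Suc R * (\<rho> - a)))"
      by (rule norm_kernel_tail_le[OF w u(2,3) a])
  next
    fix x assume "x \<in> S"
    then show "cmod (kernel_tail R (v x) w) \<le> 2 / (\<rho>^Suc R * (\<rho> - 1))"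
      using norm_kernel_tail_le[OF w _ _ rho, of "v x" R] v by (simp add: norm_divide)
  qed simp
  also have "\<dots> = 2 * (a^Suc R / (\<rho>^Suc R * (\<rho> - a))) + (\<Sum>x\<in>S. cmod (c x)) * (2 / (\<rho>^Suc R * (\<rho> - 1)))"
    by (simp only: sum_distrib_right)
  finally have "cmod (kernel_tail R u w - (\<Sum>x\<in>S. c x * kernel_tail R (v x) w))
      \<le> 2 * (a^Suc R / (\<rho>^Suc R * (\<rho> - a))) + (\<Sum>x\<in>S. cmod (c x)) * (2 / (\<rho>^Suc R * (\<rho> - 1)))" .
  moreover have "0 \<le> \<kappa>" using f norm_ge_zero order_trans by blast
  ultimately show ?thesis
    unfolding eq norm_mult using f by (intro mult_mono) auto
qed

lemma joukowski_quadrature_error_bound: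
  fixes f :: "complex \<Rightarrow> complex" and c v :: "'a \<Rightarrow> complex"
  assumes rho: "1 < \<rho>"
    and contf: "continuous_on (bernstein_ellipse_closed \<rho>) f"
    and holf: "f holomorphic_on bernstein_ellipse \<rho>"
    and f_bound: "\<And>z. z \<in> bernstein_ellipse_boundary \<rho> \<Longrightarrow> cmod (f z) \<le> \<kappa>"
    and u: "u \<noteq> 0" "cmod u \<le> a" "cmod (1/u) \<le> a" and a: "a < \<rho>"
    and S: "finite S" and v: "\<And>x. x \<in> S \<Longrightarrow> cmod (v x) = 1"
    and exact: "\<And>k. k \<le> R \<Longrightarrow> (\<Sum>x\<in>S. c x * cheb k (joukowski (v x))) = cheb k (joukowski u)"
  shows "cmod (f (joukowski u) - (\<Sum>x\<in>S. c x * f (joukowski (v x))))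
    \<le> \<kappa> * \<rho> * (2 * (a^Suc R / (\<rho>^Suc R * (\<rho> - a)))
      + (\<Sum>x\<in>S. cmod (c x)) * (2 / (\<rho>^Suc R * (\<rho> - 1))))"
proof -
  define B where "B = 2 * (a^Suc R / (\<rho>^Suc R * (\<rho> - a)))
    + (\<Sum>x\<in>S. cmod (c x)) * (2 / (\<rho>^Suc R * (\<rho> - 1)))"
  define E where "E = f (joukowski u) - (\<Sum>x\<in>S. c x * f (joukowski (v x)))"
  define G where "G w = joukowski_kernel f (joukowski u) w
    - (\<Sum>x\<in>S. c x * joukowski_kernel f (joukowski (v x)) w)" for w
  have u': "cmod u < \<rho>" "cmod (1/u) < \<rho>" using u a by linarith+
  have v': "v x \<noteq> 0" "cmod (v x) < \<rho>" "cmod (1 / v x) < \<rho>" if "x \<in> S" for x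
    using v[OF that] rho by (auto simp: norm_divide)
  have kernel_v: "(joukowski_kernel f (joukowski (v x)) has_contour_integral
      2 * pi * \<i> * f (joukowski (v x))) (circlepath 0 \<rho>)" if "x \<in> S" for x
    using cauchy_formula_joukowski[OF rho contf holf v'[OF that]] .
  have integral_value: "2 * pi * \<i> * f (joukowski u)
      - (\<Sum>x\<in>S. c x * (2 * pi * \<i> * f (joukowski (v x)))) = (2 * pi * \<i>) * E"
    unfolding E_def by (simp add: right_diff_distrib sum_distrib_left mult_ac)
  have integral: "(G has_contour_integral (2 * pi * \<i>) * E) (circlepath 0 \<rho>)"
    unfolding G_def integral_value[symmetric]
    by (intro has_contour_integral_diff cauchy_formula_joukowski[OF rho contf holf u(1) u']
        has_contour_integral_sum S has_contour_integral_lmul kernel_v)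
  have "joukowski (of_real \<rho>) \<in> bernstein_ellipse_boundary \<rho>"
    using rho by (intro joukowski_circle_in_boundary) auto
  then have "0 \<le> \<kappa>" using f_bound norm_ge_zero order_trans by blast
  moreover have "0 \<le> a" using u(2) norm_ge_zero order_trans by blast
  ultimately have "0 \<le> \<kappa> * B"
    unfolding B_def using a rho
    by (intro mult_nonneg_nonneg add_nonneg_nonneg divide_nonneg_nonneg sum_nonneg) auto
  moreover have "cmod (G w) \<le> \<kappa> * B" if "cmod (w - 0) = \<rho>" for w
    unfolding G_def B_def
    using joukowski_kernel_quadrature_bound[OF _ rho f_bound u a v exact, of w]
      joukowski_circle_in_boundary[of \<rho> w] that rho by simp
  ultimately have "cmod ((2 * pi * \<i>) * E) \<le> \<kappa> * B * (2 * pi * \<rho>)"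
    using rho by (intro has_contour_integral_bound_circlepath[OF integral]) auto
  then have "2 * pi * cmod E \<le> 2 * pi * (\<kappa> * \<rho> * B)" by (simp add: norm_mult mult_ac)
  then have "cmod E \<le> \<kappa> * \<rho> * B" using pi_gt_zero by simp
  then show ?thesis unfolding E_def B_def .
qed

lemma joukowski_cis: "joukowski (cis \<theta>) = of_real (cos \<theta>)"
  by (simp add: joukowski_def cis_divide[of 0, simplified] complex_eq_iff)

lemma quadrature_error_bound:
  fixes f :: "complex \<Rightarrow> complex" and c :: "real \<Rightarrow> real" and S :: "real set"
  assumes rho: "1 < \<rho>"
    and contf: "continuous_on (bernstein_ellipse_closed \<rho>) f"
    and holf: "f holomorphic_on bernstein_ellipse \<rho>"
    and f_bound: "\<And>z. z \<in> bernstein_ellipse_boundary \<rho> \<Longrightarrow> cmod (f z) \<le> \<kappa>"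
    and S: "finite S" "S \<subseteq> {-1..1}"
    and exact: "\<And>k. k \<le> R \<Longrightarrow>
      (\<Sum>x\<in>S. c x * poly (cheb_poly k) x) = poly (cheb_poly k) ((\<sigma> + 1/\<sigma>)/2)"
    and \<sigma>: "1 \<le> \<sigma>" "\<sigma> < \<rho>"
  shows "cmod (f (of_real ((\<sigma> + 1/\<sigma>)/2)) - (\<Sum>x\<in>S. of_real (c x) * f (of_real x)))
    \<le> \<kappa> * \<rho> * (2 * (\<sigma>^Suc R / (\<rho>^Suc R * (\<rho> - \<sigma>)))
      + (\<Sum>x\<in>S. \<bar>c x\<bar>) * (2 / (\<rho>^Suc R * (\<rho> - 1))))"
proof -
  \<comment> \<open>The target is \<open>J(\<sigma>)\<close> and the node \<open>x = cos \<theta>\<close> is \<open>J(e\<^sup>i\<^sup>\<theta>)\<close>.\<close>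
  define t where "t = (\<sigma> + 1/\<sigma>)/2"
  define u where "u = complex_of_real \<sigma>"
  define v where "v x = cis (arccos x)" for x
  have u: "u \<noteq> 0" "cmod u \<le> \<sigma>" "cmod (1/u) \<le> \<sigma>"
    using \<sigma> order_trans[of "1/\<sigma>" 1 \<sigma>] by (auto simp: u_def norm_divide)
  have Ju: "joukowski u = of_real t" by (simp add: u_def t_def joukowski_of_real)
  have Jv: "joukowski (v x) = of_real x" if "x \<in> S" for x
    using that S(2) by (auto simp: v_def joukowski_cis cos_arccos)
  have v: "cmod (v x) = 1" for x by (simp add: v_def)
  have "(\<Sum>x\<in>S. of_real (c x) * cheb k (joukowski (v x))) = cheb k (joukowski u)" if "k \<le> R" for k
    using exact[OF that, folded t_def] by (simp add: Jv Ju cheb_of_real flip: of_real_mult of_real_sum)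
  from joukowski_quadrature_error_bound[OF rho contf holf f_bound u \<sigma>(2) S(1) v this]
  show ?thesis by (simp add: Jv Ju t_def[symmetric] cong: sum.cong)
qed

section \<open>Fekete points on an equispaced grid\<close>

definition lagrange_basis :: "real set \<Rightarrow> real \<Rightarrow> real poly" where
  "lagrange_basis S x = smult (1 / (\<Prod>y\<in>S-{x}. (x - y))) (\<Prod>y\<in>S-{x}. [:-y, 1:])"

lemma poly_lagrange_basis: "poly (lagrange_basis S x) t = (\<Prod>y\<in>S-{x}. (t - y) / (x - y))"
  unfolding lagrange_basis_def by (simp add: poly_prod prod_dividef)

lemma poly_lagrange_basis_self: "finite S \<Longrightarrow> poly (lagrange_basis S x) x = 1"
  unfolding poly_lagrange_basis by (intro prod.neutral) auto

lemma poly_lagrange_basis_other: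
  "finite S \<Longrightarrow> t \<in> S \<Longrightarrow> t \<noteq> x \<Longrightarrow> poly (lagrange_basis S x) t = 0"
  unfolding poly_lagrange_basis by (rule prod_zero) auto

lemma degree_lagrange_basis:
  assumes "finite S" "x \<in> S"
  shows "degree (lagrange_basis S x) \<le> card S - 1"
proof -
  have "degree (\<Prod>y\<in>S-{x}. [:-y, 1:]) \<le> (\<Sum>y\<in>S-{x}. degree [:-y, (1::real):])"
    using degree_prod_sum_le[of "S-{x}" "\<lambda>y. [:-y, (1::real):]"] assms by (simp add: o_def)
  also have "\<dots> = card S - 1" using assms by simp
  finally show ?thesis
    unfolding lagrange_basis_def using degree_smult_le order_trans by blast
qed

lemma lagrange_interpolation:
  assumes S: "finite S" "card S = Suc R" and p: "degree p \<le> R"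
  shows "(\<Sum>x\<in>S. poly (lagrange_basis S x) t * poly p x) = poly p t"
proof -
  define q where "q = (\<Sum>x\<in>S. smult (poly p x) (lagrange_basis S x))"
  have "degree q \<le> R"
    unfolding q_def using degree_lagrange_basis[OF S(1)] S(2)
    by (intro degree_sum_le S(1)) (fastforce intro: order_trans[OF degree_smult_le])
  moreover have "poly q y = poly p y" if "y \<in> S" for y
  proof -
    have "poly q y = poly (lagrange_basis S y) y * poly p y
        + (\<Sum>x\<in>S-{y}. poly (lagrange_basis S x) y * poly p x)"
      unfolding q_def poly_sum by (simp add: sum.remove[OF S(1) that] mult.commute)
    also have "(\<Sum>x\<in>S-{y}. poly (lagrange_basis S x) y * poly p x) = 0"
      using poly_lagrange_basis_other[OF S(1) that] by (intro sum.neutral) auto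
    finally show ?thesis using poly_lagrange_basis_self[OF S(1)] by simp
  qed
  ultimately have "q = p"
    by (intro poly_eqI_degree[where A = S]) (use S p in auto)
  then have "poly p t = poly q t" by simp
  also have "\<dots> = (\<Sum>x\<in>S. poly (lagrange_basis S x) t * poly p x)"
    by (simp add: q_def poly_sum mult.commute)
  finally show ?thesis ..
qed

definition vandermonde_abs :: "real set \<Rightarrow> real" where
  "vandermonde_abs S = (\<Prod>x\<in>S. \<Prod>y\<in>S-{x}. \<bar>x - y\<bar>)"

lemma vandermonde_abs_pos: "finite S \<Longrightarrow> 0 < vandermonde_abs S"
  unfolding vandermonde_abs_def by (intro prod_pos) auto

lemma vandermonde_abs_insert:
  assumes "finite T" "a \<notin> T"
  shows "vandermonde_abs (insert a T) = (\<Prod>y\<in>T. \<bar>a - y\<bar>)^2 * vandermonde_abs T"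
proof -
  have "(\<Prod>y\<in>insert a T - {x}. \<bar>x - y\<bar>) = \<bar>a - x\<bar> * (\<Prod>y\<in>T-{x}. \<bar>x - y\<bar>)" if "x \<in> T" for x
  proof -
    have "insert a T - {x} = insert a (T - {x})" using that assms by auto
    then show ?thesis using assms that by (simp add: abs_minus_commute)
  qed
  moreover have "insert a T - {a} = T" using assms by auto
  ultimately have "vandermonde_abs (insert a T)
      = (\<Prod>y\<in>T. \<bar>a - y\<bar>) * (\<Prod>x\<in>T. \<bar>a - x\<bar> * (\<Prod>y\<in>T-{x}. \<bar>x - y\<bar>))"
    unfolding vandermonde_abs_def using assms by simp
  then show ?thesis
    unfolding vandermonde_abs_def by (simp add: prod.distrib power2_eq_square)
qed

lemma fekete_set_exists:
  assumes "finite G" "n \<le> card G"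
  obtains S where "S \<subseteq> G" "card S = n"
    "\<And>S'. S' \<subseteq> G \<Longrightarrow> card S' = n \<Longrightarrow> vandermonde_abs S' \<le> vandermonde_abs S"
proof -
  define F where "F = {S. S \<subseteq> G \<and> card S = n}"
  have "finite F" unfolding F_def using assms(1) by simp
  moreover have "F \<noteq> {}" using obtain_subset_with_card_n[OF assms(2)] unfolding F_def by blast
  ultimately have "Max (vandermonde_abs ` F) \<in> vandermonde_abs ` F" by (intro Max_in) auto
  then obtain S where S: "S \<in> F" "vandermonde_abs S = Max (vandermonde_abs ` F)" by force
  then have "vandermonde_abs S' \<le> vandermonde_abs S" if "S' \<in> F" for S'
    using \<open>finite F\<close> that by (simp add: Max_ge)
  then show ?thesis using that S(1) unfolding F_def by blast
qed

text \<open>Exchanging a node \<open>x\<close> of a Fekete set for \<open>t\<close> multiplies the Vandermonde product by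
  the square of the Lagrange basis polynomial of \<open>x\<close> at \<open>t\<close>.\<close>
lemma fekete_lagrange_basis_bound:
  assumes G: "finite G" and S: "S \<subseteq> G" "card S = n"
    and max: "\<And>S'. S' \<subseteq> G \<Longrightarrow> card S' = n \<Longrightarrow> vandermonde_abs S' \<le> vandermonde_abs S"
    and x: "x \<in> S" and t: "t \<in> G"
  shows "\<bar>poly (lagrange_basis S x) t\<bar> \<le> 1"
proof (cases "t \<in> S")
  case True
  then show ?thesis using finite_subset[OF S(1) G]
    by (cases "t = x") (simp_all add: poly_lagrange_basis_self poly_lagrange_basis_other)
next
  case False
  define T where "T = S - {x}"
  have fT: "finite T" using finite_subset[OF S(1) G] by (simp add: T_def)
  have xT: "x \<notin> T" and tT: "t \<notin> T" using False by (auto simp: T_def)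
  have "0 < card S" using x finite_subset[OF S(1) G] card_gt_0_iff by blast
  then have "insert t T \<subseteq> G" "card (insert t T) = n"
    using t S x False fT finite_subset[OF S(1) G] by (auto simp: T_def card_insert_if)
  moreover have "S = insert x T" using x by (auto simp: T_def)
  ultimately have "vandermonde_abs (insert t T) \<le> vandermonde_abs (insert x T)" using max by metis
  then have "(\<Prod>y\<in>T. \<bar>t - y\<bar>)^2 \<le> (\<Prod>y\<in>T. \<bar>x - y\<bar>)^2"
    using vandermonde_abs_insert[OF fT xT] vandermonde_abs_insert[OF fT tT] vandermonde_abs_pos[OF fT]
    by simp
  then have "(\<Prod>y\<in>T. \<bar>t - y\<bar>) \<le> (\<Prod>y\<in>T. \<bar>x - y\<bar>)"
    by (rule power2_le_imp_le) (simp add: prod_nonneg)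
  moreover have "0 < (\<Prod>y\<in>T. \<bar>x - y\<bar>)" using xT by (intro prod_pos) auto
  ultimately show ?thesis
    unfolding poly_lagrange_basis T_def[symmetric] by (simp add: prod_dividef abs_prod)
qed

lemma poly_map_poly_of_real: "poly (map_poly of_real p) (of_real x) = of_real (poly p x)"
  by (induction p) (auto simp: map_poly_pCons)

lemma pderiv_map_poly_of_real: "pderiv (map_poly of_real p) = map_poly of_real (pderiv p)"
  by (rule poly_eqI) (simp add: coeff_pderiv coeff_map_poly)

lemma higher_deriv_poly: "(deriv ^^ n) (poly p) = poly ((pderiv ^^ n) (p :: complex poly))"
proof (induction n)
  case (Suc n)
  have "deriv (poly ((pderiv ^^ n) p)) = poly (pderiv ((pderiv ^^ n) p))"
    by (rule ext, rule DERIV_imp_deriv, rule poly_DERIV)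
  then show ?case using Suc by simp
qed simp

text \<open>Cauchy's estimate on the circle of radius \<open>\<delta>\<close> about \<open>\<xi>\<close>, which lies in the ellipse with
  parameter \<open>s\<close>, combined with Bernstein's lemma there.\<close>
lemma poly_second_deriv_bound:
  fixes p :: "real poly"
  assumes deg: "degree p \<le> R" and bnd: "\<And>x. -1 \<le> x \<Longrightarrow> x \<le> 1 \<Longrightarrow> \<bar>poly p x\<bar> \<le> N"
    and \<xi>: "-1 \<le> \<xi>" "\<xi> \<le> 1" and \<delta>: "0 < \<delta>" and s: "1 \<le> s" "2 + 2 * \<delta> \<le> s + 1/s"
  shows "\<bar>poly (pderiv (pderiv p)) \<xi>\<bar> \<le> 2 * N * s^R / \<delta>^2"
proof -
  define P where "P = map_poly complex_of_real p"
  have degP: "degree P \<le> R" unfolding P_def using deg by (simp add: degree_map_poly)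
  have bndP: "cmod (poly P (of_real x)) \<le> N" if "-1 \<le> x" "x \<le> 1" for x
    using bnd[OF that] by (simp add: P_def poly_map_poly_of_real)
  have "cmod ((deriv ^^ 2) (poly P) (of_real \<xi>)) \<le> fact 2 * (N * s^R) / \<delta>^2"
  proof (rule Cauchy_inequality)
    fix z assume z: "cmod (of_real \<xi> - z) = \<delta>"
    have "focal_sum z \<le> focal_sum (of_real \<xi>) + 2 * cmod (of_real \<xi> - z)"
      using norm_triangle_ineq[of "z - of_real \<xi>" "of_real \<xi> - 1"]
        norm_triangle_ineq[of "z - of_real \<xi>" "of_real \<xi> + 1"]
      by (simp add: focal_sum_def norm_minus_commute)
    also have "\<dots> = 2 + 2 * \<delta>" using \<xi> z by (simp add: focal_sum_of_real)
    finally show "cmod (poly P z) \<le> N * s^R"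
      using bernstein_ellipse_poly_bound[OF degP bndP s(1)] s(2) by force
  qed (use \<delta> in \<open>auto intro!: holomorphic_intros continuous_intros\<close>)
  moreover have "(deriv ^^ 2) (poly P) (of_real \<xi>) = of_real (poly (pderiv (pderiv p)) \<xi>)"
    unfolding higher_deriv_poly P_def
    by (simp add: pderiv_map_poly_of_real poly_map_poly_of_real numeral_2_eq_2)
  ultimately show ?thesis by simp
qed

lemma ellipse_parameter_bound:
  fixes R :: nat
  assumes R: "1 \<le> R"
  defines "\<delta> \<equiv> 1 / real R ^ 2"
  defines "s \<equiv> 1 + \<delta> + sqrt (2 * \<delta> + \<delta>^2)"
  shows "1 \<le> s" "2 + 2 * \<delta> \<le> s + 1/s" "s ^ R \<le> 9"
proof -
  have \<delta>0: "0 < \<delta>" using R by (simp add: \<delta>_def)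
  then show s1: "1 \<le> s" by (simp add: s_def)
  have "s * (1 + \<delta> - sqrt (2 * \<delta> + \<delta>^2)) = (1 + \<delta>)^2 - (sqrt (2 * \<delta> + \<delta>^2))^2"
    by (simp add: s_def algebra_simps power2_eq_square)
  also have "\<dots> = 1" using \<delta>0 by (simp add: power2_eq_square algebra_simps)
  finally have "1/s = 1 + \<delta> - sqrt (2 * \<delta> + \<delta>^2)" using s1 by (simp add: field_simps)
  then show "2 + 2 * \<delta> \<le> s + 1/s" by (simp add: s_def)
  show "s ^ R \<le> 9"
  proof (cases "R = 1")
    case True
    moreover have "sqrt 3 \<le> 2" by (rule real_le_lsqrt) auto
    ultimately show ?thesis by (simp add: s_def \<delta>_def)
  next
    case False
    then have R2: "2 \<le> real R" using R by simp
    have "sqrt (2 * \<delta> + \<delta>^2) \<le> (2 * real R - 1) / real R ^ 2"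
    proof (rule real_le_lsqrt)
      have "2 * \<delta> + \<delta>^2 = (2 * real R ^ 2 + 1) / real R ^ 4"
        using R by (simp add: \<delta>_def field_simps power2_eq_square power4_eq_xxxx)
      also have "\<dots> \<le> (2 * real R - 1)^2 / real R ^ 4"
        using R2 by (intro divide_right_mono) (auto simp: power2_eq_square algebra_simps)
      also have "\<dots> = ((2 * real R - 1) / real R ^ 2)^2"
        by (simp add: power_divide power4_eq_xxxx power2_eq_square)
      finally show "2 * \<delta> + \<delta>^2 \<le> ((2 * real R - 1) / real R ^ 2)^2" .
    qed (use R in simp)
    moreover have "\<delta> + (2 * real R - 1) / real R ^ 2 = 2 / real R"
      using R by (simp add: \<delta>_def field_simps power2_eq_square)
    ultimately have "s \<le> 1 + 2 / real R" unfolding s_def by linarith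
    then have "s ^ R \<le> (1 + 2 / real R) ^ R" using s1 by (intro power_mono) auto
    also have "\<dots> \<le> exp (2 / real R) ^ R" by (intro power_mono) (auto simp: add_nonneg_nonneg)
    also have "\<dots> = exp 1 * exp 1" using R by (simp add: exp_of_nat_mult[symmetric] exp_add[symmetric])
    also have "\<dots> \<le> 3 * 3" using exp_le by (intro mult_mono) auto
    finally show ?thesis by simp
  qed
qed

text \<open>Near an interior extremum the first-order term vanishes, so the second derivative bound
  controls the variation of \<open>p\<close> to second order.\<close>
lemma poly_near_interior_max:
  fixes p :: "real poly"
  assumes deg: "degree p \<le> R" and R: "1 \<le> R"
    and bnd: "\<And>y. -1 \<le> y \<Longrightarrow> y \<le> 1 \<Longrightarrow> \<bar>poly p y\<bar> \<le> \<bar>poly p x\<bar>"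
    and x: "-1 < x" "x < 1" and t: "-1 \<le> t" "t \<le> 1" "\<bar>t - x\<bar> \<le> 1 / (4 * real R ^ 2)"
  shows "\<bar>poly p t - poly p x\<bar> \<le> 9/16 * \<bar>poly p x\<bar>"
proof (cases "t = x")
  case False
  define N where "N = \<bar>poly p x\<bar>"
  define \<delta> where "\<delta> = 1 / real R ^ 2"
  define s where "s = 1 + \<delta> + sqrt (2 * \<delta> + \<delta>^2)"
  note s = ellipse_parameter_bound[OF R, folded \<delta>_def, folded s_def]
  have \<delta>0: "0 < \<delta>" using R by (simp add: \<delta>_def)
  have "poly (pderiv p) x = 0"
  proof -
    define d where "d = min (x + 1) (1 - x)"
    have d: "0 < d" using x by (simp add: d_def)
    have "\<bar>poly p z\<bar> \<le> N" if "\<bar>x - z\<bar> < d" for z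
      using that bnd[of z] by (auto simp: d_def N_def)
    then show ?thesis
      using DERIV_local_max[OF poly_DERIV d] DERIV_local_min[OF poly_DERIV d]
      by (cases "0 \<le> poly p x") (force simp: N_def)+
  qed
  moreover obtain \<xi> where \<xi>: "-1 \<le> \<xi>" "\<xi> \<le> 1"
    and taylor: "poly p t = (\<Sum>m<2. poly ((pderiv ^^ m) p) x / fact m * (t - x)^m)
                   + poly ((pderiv ^^ 2) p) \<xi> / fact 2 * (t - x)^2"
  proof -
    have "\<exists>\<xi>. (if t < x then t < \<xi> \<and> \<xi> < x else x < \<xi> \<and> \<xi> < t) \<and>
        poly p t = (\<Sum>m<2. poly ((pderiv ^^ m) p) x / fact m * (t - x)^m)
                   + poly ((pderiv ^^ 2) p) \<xi> / fact 2 * (t - x)^2"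
      by (rule Taylor[where a = "-1" and b = 1]) (use x t False in \<open>auto intro: poly_DERIV\<close>)
    then show ?thesis using that x t by (smt (verit))
  qed
  ultimately have "\<bar>poly p t - poly p x\<bar> = \<bar>poly (pderiv (pderiv p)) \<xi>\<bar> / 2 * (t - x)^2"
    by (simp add: numeral_2_eq_2 lessThan_Suc abs_mult)
  also have "\<dots> \<le> (2 * N * s^R / \<delta>^2) / 2 * (\<delta> / 4)^2"
  proof (rule mult_mono)
    have "\<bar>t - x\<bar> \<le> \<delta> / 4" using t(3) by (simp add: \<delta>_def)
    then show "(t - x)^2 \<le> (\<delta> / 4)^2"
      by (metis abs_ge_zero order_trans power2_abs power_mono)
    show "\<bar>poly (pderiv (pderiv p)) \<xi>\<bar> / 2 \<le> 2 * N * s^R / \<delta>^2 / 2"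
      using poly_second_deriv_bound[OF deg _ \<xi> \<delta>0 s(1,2), of N] bnd by (simp add: N_def mult_ac)
  qed (use s(1) in \<open>auto simp: N_def\<close>)
  also have "\<dots> = N * s^R / 16" using \<delta>0 by (simp add: field_simps power2_eq_square)
  also have "\<dots> \<le> 9/16 * N" using mult_left_mono[OF s(3), of N] by (simp add: N_def mult.commute)
  finally show ?thesis by (simp add: N_def)
qed simp

text \<open>In the notation of the paper, \<open>grid_point M j = t_{i-M+j}\<close> and \<open>t_i = grid_point M M\<close>.\<close>
definition grid_point :: "nat \<Rightarrow> nat \<Rightarrow> real" where
  "grid_point M j = -1 + real j * (2 / (real M - 1))"

lemma grid_point_bounds:
  assumes "2 \<le> M" "j < M"
  shows "-1 \<le> grid_point M j" "grid_point M j \<le> 1"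
proof -
  have "real j \<le> real M - 1" using assms by linarith
  then show "grid_point M j \<le> 1" using assms by (simp add: grid_point_def field_simps)
  show "-1 \<le> grid_point M j" using assms by (simp add: grid_point_def)
qed

lemma grid_point_first: "grid_point M 0 = -1"
  by (simp add: grid_point_def)

lemma grid_point_last:
  assumes "2 \<le> M"
  shows "grid_point M (M - 1) = 1"
proof -
  have "real M - 1 \<noteq> 0" using assms by simp
  then show ?thesis using assms by (simp add: grid_point_def of_nat_diff field_simps)
qed

lemma inj_on_grid_point: "2 \<le> M \<Longrightarrow> inj_on (grid_point M) {..<M}"
  by (auto simp: inj_on_def grid_point_def)

lemma grid_point_near:
  assumes M: "2 \<le> M" and x: "-1 \<le> x" "x \<le> 1"
  obtains j where "j < M" "\<bar>grid_point M j - x\<bar> \<le> 1 / (real M - 1)"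
proof -
  define h where "h = 2 / (real M - 1)"
  define y where "y = (x + 1) / h"
  define j where "j = nat \<lfloor>y + 1/2\<rfloor>"
  have h: "0 < h" using M by (simp add: h_def)
  have y_eq: "y = (x + 1) * (real M - 1) / 2" by (simp add: y_def h_def)
  have y: "0 \<le> y" "y \<le> real M - 1"
  proof -
    show "0 \<le> y" using x h by (simp add: y_def)
    have "(x + 1) * (real M - 1) / 2 \<le> 2 * (real M - 1) / 2"
      using x M by (intro divide_right_mono mult_right_mono) auto
    then show "y \<le> real M - 1" by (simp add: y_eq mult.commute)
  qed
  have "real j = of_int \<lfloor>y + 1/2\<rfloor>" using y by (simp add: j_def)
  then have j: "\<bar>real j - y\<bar> \<le> 1/2"
    using of_int_floor_le[of "y + 1/2"] real_of_int_floor_add_one_gt[of "y + 1/2"] by linarith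
  then have "j < M" using y by linarith
  moreover have "grid_point M j - x = h * (real j - y)"
    using h by (simp add: grid_point_def y_def h_def field_simps)
  then have "\<bar>grid_point M j - x\<bar> \<le> h * (1/2)"
    using j h by (simp add: abs_mult mult_left_mono)
  moreover have "h * (1/2) = 1 / (real M - 1)" using M by (simp add: h_def field_simps)
  ultimately show ?thesis using that by simp
qed

lemma poly_bounded_by_grid:
  fixes p :: "real poly"
  assumes M: "2 \<le> M" and MR: "4 * real R ^ 2 \<le> real M - 1" and deg: "degree p \<le> R"
    and grid: "\<And>j. j < M \<Longrightarrow> \<bar>poly p (grid_point M j)\<bar> \<le> 1"
    and x: "-1 \<le> x" "x \<le> 1"
  shows "\<bar>poly p x\<bar> \<le> 3"
proof -
  have "\<exists>x0\<in>{-1..1}. \<forall>y\<in>{-1..1}. \<bar>poly p y\<bar> \<le> \<bar>poly p x0\<bar>"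
    by (rule continuous_attains_sup) (auto intro!: continuous_intros)
  then obtain x0 where x0: "-1 \<le> x0" "x0 \<le> 1"
    and max: "\<And>y. -1 \<le> y \<Longrightarrow> y \<le> 1 \<Longrightarrow> \<bar>poly p y\<bar> \<le> \<bar>poly p x0\<bar>"
    by auto
  have "\<bar>poly p x0\<bar> \<le> 3"
  proof (rule ccontr)
    assume big: "\<not> \<bar>poly p x0\<bar> \<le> 3"
    have "R \<noteq> 0"
    proof
      assume "R = 0"
      then have "poly p x0 = poly p (grid_point M 0)" using deg by (simp add: poly_altdef)
      then show False using grid[of 0] M big by simp
    qed
    have "\<bar>poly p (-1)\<bar> \<le> 1" "\<bar>poly p 1\<bar> \<le> 1"
      using grid[of 0] grid[of "M - 1"] M unfolding grid_point_first grid_point_last[OF M] by simp_all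
    then have "x0 \<noteq> -1" "x0 \<noteq> 1" using big by auto
    obtain j where j: "j < M" "\<bar>grid_point M j - x0\<bar> \<le> 1 / (real M - 1)"
      using grid_point_near[OF M x0] .
    have "1 / (real M - 1) \<le> 1 / (4 * real R ^ 2)"
      using MR \<open>R \<noteq> 0\<close> M by (intro divide_left_mono mult_pos_pos) auto
    then have "\<bar>poly p (grid_point M j) - poly p x0\<bar> \<le> 9/16 * \<bar>poly p x0\<bar>"
      using poly_near_interior_max[OF deg _ max, of "grid_point M j"] \<open>R \<noteq> 0\<close> x0
        \<open>x0 \<noteq> -1\<close> \<open>x0 \<noteq> 1\<close> grid_point_bounds[OF M j(1)] j(2) by simp
    then show False using grid[OF j(1)] big by linarith
  qed
  then show ?thesis using max[OF x] by linarith
qed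

text \<open>The weights are the Lagrange basis polynomials of a Fekete subset of the grid, evaluated
  at \<open>t\<close>.\<close>
lemma fekete_extrapolation_weights:
  assumes M: "2 \<le> M" and MR: "4 * real R ^ 2 \<le> real M - 1"
    and s: "1 \<le> s" "focal_sum (of_real t) \<le> s + 1/s"
  obtains S c where "S \<subseteq> grid_point M ` {..<M}" "finite S"
    "\<And>p. degree p \<le> R \<Longrightarrow> (\<Sum>x\<in>S. c x * poly p x) = poly p t"
    "(\<Sum>x\<in>S. \<bar>c x\<bar>) \<le> 3 * (real R + 1) * s ^ R"
proof -
  define G where "G = grid_point M ` {..<M}"
  have G: "finite G" "card G = M"
    using inj_on_grid_point[OF M] by (simp_all add: G_def card_image)
  have "Suc R \<le> M"
  proof -
    have "R \<le> R^2" by (simp add: power2_eq_square le_square)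
    then have "real R \<le> real R ^ 2" by (metis of_nat_le_iff of_nat_power)
    then have "real R \<le> real M - 1" using MR zero_le_power2[of "real R"] by linarith
    then show ?thesis by linarith
  qed
  then obtain S where S: "S \<subseteq> G" "card S = Suc R"
    and fekete: "\<And>S'. S' \<subseteq> G \<Longrightarrow> card S' = Suc R \<Longrightarrow> vandermonde_abs S' \<le> vandermonde_abs S"
    using fekete_set_exists[OF G(1)] G(2) by metis
  have fS: "finite S" using S G finite_subset by blast
  define c where "c x = poly (lagrange_basis S x) t" for x
  have "\<bar>c x\<bar> \<le> 3 * s ^ R" if x: "x \<in> S" for x
  proof -
    define L where "L = map_poly complex_of_real (lagrange_basis S x)"
    have degL: "degree L \<le> R"
      using degree_lagrange_basis[OF fS x] S(2) by (simp add: L_def degree_map_poly)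
    have "\<bar>poly (lagrange_basis S x) y\<bar> \<le> 3" if "-1 \<le> y" "y \<le> 1" for y
    proof (rule poly_bounded_by_grid[OF M MR _ _ that])
      show "degree (lagrange_basis S x) \<le> R"
        using degree_lagrange_basis[OF fS x] S(2) by simp
      show "\<bar>poly (lagrange_basis S x) (grid_point M j)\<bar> \<le> 1" if "j < M" for j
        using fekete_lagrange_basis_bound[OF G(1) S fekete x] that by (simp add: G_def)
    qed
    then have "cmod (poly L (of_real t)) \<le> 3 * s ^ R"
      using bernstein_ellipse_poly_bound[OF degL _ s] by (simp add: L_def poly_map_poly_of_real)
    then show ?thesis by (simp add: L_def c_def poly_map_poly_of_real)
  qed
  then have "(\<Sum>x\<in>S. \<bar>c x\<bar>) \<le> (\<Sum>x\<in>S. 3 * s ^ R)" by (rule sum_mono)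
  also have "\<dots> = 3 * (real R + 1) * s ^ R" using S(2) by simp
  finally have weights: "(\<Sum>x\<in>S. \<bar>c x\<bar>) \<le> 3 * (real R + 1) * s ^ R" .
  show ?thesis
  proof (rule that[OF _ fS _ weights])
    show "S \<subseteq> grid_point M ` {..<M}" using S(1) by (simp add: G_def)
    show "(\<Sum>x\<in>S. c x * poly p x) = poly p t" if "degree p \<le> R" for p
      using lagrange_interpolation[OF fS S(2) that] by (simp add: c_def)
  qed
qed

section \<open>Linear algebra\<close>

lemma matrix_inv_right:
  fixes A :: "'a::semiring_1^'n^'n"
  assumes "invertible A"
  shows "A ** matrix_inv A = mat 1"
proof -
  have "\<exists>A'. A ** A' = mat 1 \<and> A' ** A = mat 1" using assms by (simp add: invertible_def)
  then have "A ** matrix_inv A = mat 1 \<and> matrix_inv A ** A = mat 1"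
    unfolding matrix_inv_def by (rule someI_ex)
  then show ?thesis by simp
qed

lemma matrix_inv_solves:
  fixes A :: "'a::comm_semiring_1^'n^'n"
  assumes "invertible A"
  shows "A *v (matrix_inv A *v b) = b"
  using matrix_inv_right[OF assms] by (simp add: matrix_vector_mul_assoc)

lemma matrix_inv_mult_vec_cramer:
  fixes A :: "'a::field^'n^'n"
  assumes "invertible A"
  shows "(matrix_inv A *v b) $ k = det (\<chi> i j. if j = k then b $ i else A $ i $ j) / det A"
  using cramer[OF invertible_det_nz[THEN iffD1, OF assms], of "matrix_inv A *v b" b]
    matrix_inv_solves[OF assms] by simp

lemma holomorphic_on_det:
  fixes F :: "complex \<Rightarrow> complex^'n^'n"
  assumes "\<And>i j. (\<lambda>t. F t $ i $ j) holomorphic_on S"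
  shows "(\<lambda>t. det (F t)) holomorphic_on S"
  unfolding det_def using assms by (intro holomorphic_intros) auto

lemma continuous_on_det:
  fixes F :: "'a::topological_space \<Rightarrow> 'b::{real_normed_field}^'n^'n"
  assumes "\<And>i j. continuous_on S (\<lambda>t. F t $ i $ j)"
  shows "continuous_on S (\<lambda>t. det (F t))"
  unfolding det_def
  by (intro continuous_on_sum continuous_on_mult continuous_on_const continuous_on_prod assms)

lemma holomorphic_on_matrix_inv_mult_vec:
  fixes A :: "complex \<Rightarrow> complex^'n^'n" and b :: "complex \<Rightarrow> complex^'n"
  assumes A: "\<And>i j. (\<lambda>t. A t $ i $ j) holomorphic_on S"
    and b: "\<And>i. (\<lambda>t. b t $ i) holomorphic_on S"
    and inv: "\<And>t. t \<in> S \<Longrightarrow> invertible (A t)"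
  shows "(\<lambda>t. (matrix_inv (A t) *v b t) $ k) holomorphic_on S"
proof (rule holomorphic_transform)
  have "(\<lambda>t. det (\<chi> i j. if j = k then b t $ i else A t $ i $ j)) holomorphic_on S"
    using A b by (intro holomorphic_on_det) (case_tac "j = k", auto)
  moreover have "det (A t) \<noteq> 0" if "t \<in> S" for t using inv[OF that] invertible_det_nz by blast
  ultimately show "(\<lambda>t. det (\<chi> i j. if j = k then b t $ i else A t $ i $ j) / det (A t))
      holomorphic_on S"
    using holomorphic_on_divide holomorphic_on_det[OF A] by blast
qed (simp add: matrix_inv_mult_vec_cramer inv)

lemma continuous_on_matrix_inv_mult_vec:
  fixes A :: "'a::topological_space \<Rightarrow> complex^'n^'n" and b :: "'a \<Rightarrow> complex^'n"
  assumes A: "continuous_on S A" and b: "continuous_on S b"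
    and inv: "\<And>t. t \<in> S \<Longrightarrow> invertible (A t)"
  shows "continuous_on S (\<lambda>t. matrix_inv (A t) *v b t)"
proof -
  have b': "continuous_on S (\<lambda>t. b t $ i)" for i
    using bounded_linear.continuous_on[OF bounded_linear_vec_nth b] .
  have A': "continuous_on S (\<lambda>t. A t $ i $ j)" for i j
    using bounded_linear.continuous_on[OF bounded_linear_vec_nth
        bounded_linear.continuous_on[OF bounded_linear_vec_nth A]] .
  have "continuous_on S (\<lambda>t. det (\<chi> i j. if j = k then b t $ i else A t $ i $ j))" for k
    using A' b' by (intro continuous_on_det) (case_tac "j = k", auto)
  moreover have "det (A t) \<noteq> 0" if "t \<in> S" for t using inv[OF that] invertible_det_nz by blast
  ultimately have "continuous_on S
      (\<lambda>t. det (\<chi> i j. if j = k then b t $ i else A t $ i $ j) / det (A t))" for k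
    using continuous_on_divide continuous_on_det[OF A'] by blast
  then have "continuous_on S (\<lambda>t. \<chi> k. det (\<chi> i j. if j = k then b t $ i else A t $ i $ j) / det (A t))"
    by (intro continuous_on_vec_lambda)
  then show ?thesis
    by (rule continuous_on_eq) (simp add: vec_eq_iff matrix_inv_mult_vec_cramer inv)
qed

lemma spec_norm_bound: "norm (A *v v) \<le> spec_norm A * norm v"
  unfolding spec_norm_def by (rule onorm[OF matrix_vector_mul_bounded_linear])

lemma spec_norm_nonneg: "0 \<le> spec_norm A"
  unfolding spec_norm_def by (rule onorm_pos_le[OF matrix_vector_mul_bounded_linear])

lemma norm_sum_vec_mult_le:
  fixes u v :: "complex^'n"
  shows "cmod (\<Sum>i\<in>UNIV. u $ i * v $ i) \<le> norm u * norm v"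
proof -
  have "cmod (\<Sum>i\<in>UNIV. u $ i * v $ i) \<le> (\<Sum>i\<in>UNIV. \<bar>cmod (u $ i)\<bar> * \<bar>cmod (v $ i)\<bar>)"
    using norm_sum[of "\<lambda>i. u $ i * v $ i" UNIV] by (simp add: norm_mult)
  also have "\<dots> \<le> norm u * norm v"
    unfolding norm_vec_def by (rule L2_set_mult_ineq)
  finally show ?thesis .
qed

lemma dual_unit_vector:
  fixes v :: "complex^'n"
  assumes "v \<noteq> 0"
  defines "u \<equiv> \<chi> i. cnj (v $ i) / of_real (norm v)"
  shows "(\<Sum>i\<in>UNIV. u $ i * v $ i) = of_real (norm v)" and "norm u = 1"
proof -
  have nv: "0 < norm v" using assms by simp
  have "cnj z * z = of_real ((cmod z)^2)" for z
    by (subst complex_norm_square) (simp add: mult.commute)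
  then have "(\<Sum>i\<in>UNIV. u $ i * v $ i) = of_real ((\<Sum>i\<in>UNIV. (cmod (v $ i))^2) / norm v)"
    unfolding u_def by (simp add: sum_divide_distrib)
  also have "(\<Sum>i\<in>UNIV. (cmod (v $ i))^2) = (norm v)^2"
    unfolding norm_vec_def L2_set_def by (simp add: sum_nonneg)
  finally show "(\<Sum>i\<in>UNIV. u $ i * v $ i) = of_real (norm v)"
    using nv by (simp add: power2_eq_square)
  have "u = (1 / norm v) *\<^sub>R (\<chi> i. cnj (v $ i))"
    by (simp add: u_def vec_eq_iff scaleR_conv_of_real[where 'a=complex])
  moreover have "norm (\<chi> i. cnj (v $ i)) = norm v" by (simp add: norm_vec_def)
  ultimately show "norm u = 1" using nv by simp
qed

section \<open>The extrapolation error\<close>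

lemma joukowski_real_preimage:
  fixes t :: real
  assumes "1 < t"
  defines "\<sigma> \<equiv> t + sqrt (t^2 - 1)"
  shows "1 < \<sigma>" "(\<sigma> + 1/\<sigma>) / 2 = t"
proof -
  have "0 < t^2 - 1" using assms by (simp add: power2_eq_square) (smt (verit) mult_less_cancel_left2)
  then have "0 < sqrt (t^2 - 1)" by simp
  then show s1: "1 < \<sigma>" using assms unfolding \<sigma>_def by linarith
  have "\<sigma> * (t - sqrt (t^2 - 1)) = 1"
    using \<open>0 < t^2 - 1\<close> by (simp add: \<sigma>_def algebra_simps power2_eq_square)
  then have "1/\<sigma> = t - sqrt (t^2 - 1)" using s1 by (simp add: field_simps)
  then show "(\<sigma> + 1/\<sigma>) / 2 = t" by (simp add: \<sigma>_def)
qed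

lemma le_Sup_image_compact:
  fixes f :: "'a::topological_space \<Rightarrow> real"
  assumes "compact K" "continuous_on K f" "z \<in> K"
  shows "f z \<le> Sup (f ` K)"
  using assms
  by (intro cSup_upper imageI bounded_imp_bdd_above compact_imp_bounded compact_continuous_image)

lemma vector_quadrature_error_bound:
  fixes X :: "complex \<Rightarrow> complex^'n" and c :: "real \<Rightarrow> real" and S :: "real set"
  assumes rho: "1 < \<rho>"
    and contX: "continuous_on (bernstein_ellipse_closed \<rho>) X"
    and holX: "\<And>i. (\<lambda>t. X t $ i) holomorphic_on bernstein_ellipse \<rho>"
    and X_bound: "\<And>z. z \<in> bernstein_ellipse_boundary \<rho> \<Longrightarrow> norm (X z) \<le> \<kappa>"
    and S: "finite S" "S \<subseteq> {-1..1}"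
    and exact: "\<And>k. k \<le> R \<Longrightarrow> (\<Sum>x\<in>S. c x * poly (cheb_poly k) x) = poly (cheb_poly k) ((\<sigma> + 1/\<sigma>)/2)"
    and \<sigma>: "1 \<le> \<sigma>" "\<sigma> < \<rho>"
  defines "B \<equiv> \<kappa> * \<rho> * (2 * (\<sigma>^Suc R / (\<rho>^Suc R * (\<rho> - \<sigma>)))
      + (\<Sum>x\<in>S. \<bar>c x\<bar>) * (2 / (\<rho>^Suc R * (\<rho> - 1))))"
  shows "norm (X (of_real ((\<sigma> + 1/\<sigma>)/2)) - (\<Sum>x\<in>S. of_real (c x) *s X (of_real x))) \<le> B"
proof -
  define t where "t = (\<sigma> + 1/\<sigma>)/2"
  define v where "v = X (of_real t) - (\<Sum>x\<in>S. of_real (c x) *s X (of_real x))"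
  show ?thesis
  proof (cases "v = 0")
    case True
    have "joukowski (of_real \<rho>) \<in> bernstein_ellipse_boundary \<rho>"
      using rho by (intro joukowski_circle_in_boundary) auto
    then have "0 \<le> \<kappa>" using X_bound norm_ge_zero order_trans by blast
    then have "0 \<le> B"
      using \<sigma> rho unfolding B_def by (intro mult_nonneg_nonneg add_nonneg_nonneg sum_nonneg) auto
    then show ?thesis using True by (simp add: v_def t_def)
  next
    case False
    \<comment> \<open>Testing the error vector against its dual unit vector \<open>u\<close> turns it into the quadrature
      error of the scalar analytic function \<open>u \<cdot> X\<close>.\<close>
    define u where "u = (\<chi> i. cnj (v $ i) / of_real (norm v))"
    define f where "f z = (\<Sum>i\<in>UNIV. u $ i * X z $ i)" for z
    have cont: "continuous_on (bernstein_ellipse_closed \<rho>) f"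
      unfolding f_def using contX
      by (intro continuous_intros bounded_linear.continuous_on[OF bounded_linear_vec_nth])
    have hol: "f holomorphic_on bernstein_ellipse \<rho>"
      unfolding f_def by (intro holomorphic_intros holX)
    have bound: "cmod (f z) \<le> \<kappa>" if "z \<in> bernstein_ellipse_boundary \<rho>" for z
      using norm_sum_vec_mult_le[of u "X z"] dual_unit_vector(2)[OF False] X_bound[OF that]
      unfolding f_def u_def by simp
    have "(\<Sum>x\<in>S. of_real (c x) * f (of_real x))
        = (\<Sum>i\<in>UNIV. u $ i * (\<Sum>x\<in>S. of_real (c x) *s X (of_real x)) $ i)"
      unfolding f_def by (simp add: sum_distrib_left sum.swap[of _ S] algebra_simps)
    then have "f (of_real t) - (\<Sum>x\<in>S. of_real (c x) * f (of_real x)) = (\<Sum>i\<in>UNIV. u $ i * v $ i)"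
      unfolding v_def f_def by (simp add: sum_subtractf algebra_simps)
    also have "\<dots> = of_real (norm v)"
      using dual_unit_vector(1)[OF False] unfolding u_def .
    finally have "norm v = cmod (f (of_real t) - (\<Sum>x\<in>S. of_real (c x) * f (of_real x)))"
      by simp
    also have "\<dots> \<le> B"
      using quadrature_error_bound[OF rho cont hol bound S exact \<sigma>] unfolding B_def t_def
      by (simp only: mult.assoc)
    finally show ?thesis by (simp add: v_def t_def)
  qed
qed

lemma sum_in_span_of_image:
  fixes F :: "'b \<Rightarrow> 'a::semiring_1^'n"
  assumes I: "finite I" "inj_on g I" and S: "S \<subseteq> g ` I"
  shows "(\<Sum>x\<in>S. a x *s F x) \<in> {\<Sum>j\<in>I. d j *s F (g j) | d. True}"
proof -
  define d where "d j = (if g j \<in> S then a (g j) else 0)" for j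
  have "(\<Sum>j\<in>I. d j *s F (g j)) = (\<Sum>j\<in>{j\<in>I. g j \<in> S}. a (g j) *s F (g j))"
    unfolding d_def using I(1) by (subst sum.inter_filter) (auto intro!: sum.cong)
  also have "\<dots> = (\<Sum>x\<in>g ` {j\<in>I. g j \<in> S}. a x *s F x)"
    using inj_on_subset[OF I(2)] by (subst sum.reindex) auto
  also have "g ` {j\<in>I. g j \<in> S} = S" using S by auto
  finally have "(\<Sum>x\<in>S. a x *s F x) = (\<Sum>j\<in>I. d j *s F (g j))" by (rule sym)
  then show ?thesis by blast
qed

lemma residual_le_spec_norm_mult_dist:
  fixes A :: "complex^'n^'n"
  assumes "A *v x = b"
  shows "norm (A *v v - b) \<le> spec_norm A * norm (x - v)"
  using spec_norm_bound[of A "v - x"] assms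
  by (simp add: matrix_vector_mult_diff_distrib norm_minus_commute)

lemma grid_step_sqrt_bound:
  fixes R M :: nat
  assumes M: "2 \<le> M" and MR: "4 * real R ^ 2 \<le> real M - 1"
  defines "ti \<equiv> 1 + 2 / (real M - 1)"
  shows "18 * (real R + 1)^2 * sqrt (ti^2 - 1) \<le> 125 * (2 * real R + 1) / 2"
proof -
  define h where "h = 2 / (real M - 1)"
  have Mr: "real M - 1 \<ge> 1" using M by simp
  have h0: "h > 0" and h2: "h \<le> 2" using Mr by (auto simp: h_def field_simps)
  define q where "q = sqrt (ti^2 - 1)"
  have qq: "q^2 = h * (2 + h)"
    using h0 by (simp add: q_def ti_def h_def[symmetric] power2_eq_square algebra_simps)
  have "18 * (real R + 1)^2 * q \<le> 125 * (2 * real R + 1) / 2"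
  proof (cases "R = 0")
    case True
    have "h * (2 + h) \<le> 2 * (2 + 2)" using h0 h2 by (intro mult_mono) auto
    then have "q^2 \<le> 3^2" using qq by simp
    then have "q \<le> 3" by (rule power2_le_imp_le) simp
    then show ?thesis using True by simp
  next
    case False
    define Rr where "Rr = real R"
    have R1: "Rr \<ge> 1" using False by (simp add: Rr_def)
    have hR: "h \<le> 1 / (2 * Rr^2)"
    proof -
      have "h = 2 / (real M - 1)" by (simp add: h_def)
      also have "\<dots> \<le> 2 / (4 * Rr^2)"
      proof (rule divide_left_mono)
        show "4 * Rr^2 \<le> real M - 1" using MR by (simp add: Rr_def)
        show "0 < (real M - 1) * (4 * Rr^2)" using Mr R1 by (intro mult_pos_pos) auto
      qed simp
      finally show ?thesis by simp
    qed
    have hh: "h \<le> 1/2"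
    proof -
      have "Rr^2 \<ge> 1" using R1 by (simp add: one_le_power)
      then have "1 / (2 * Rr^2) \<le> 1/2" by (intro divide_left_mono) auto
      then show ?thesis using hR by simp
    qed
    have "q^2 \<le> (12/10 / Rr)^2"
    proof -
      have "q^2 \<le> h * (5/2)" unfolding qq using h0 hh by (intro mult_left_mono) auto
      also have "\<dots> \<le> 1 / (2 * Rr^2) * (5/2)" using hR by (intro mult_right_mono) auto
      also have "\<dots> = (5/4) / Rr^2" by simp
      also have "\<dots> \<le> (144/100) / Rr^2" using R1 by (intro divide_right_mono) auto
      also have "\<dots> = (12/10 / Rr)^2" by (simp add: power_divide)
      finally show ?thesis .
    qed
    then have qR: "q \<le> 12/10 / Rr" by (rule power2_le_imp_le) (use R1 in simp)
    have "18 * (Rr + 1)^2 * q \<le> 18 * (Rr + 1)^2 * (12/10 / Rr)"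
      using qR by (intro mult_left_mono) auto
    also have "\<dots> \<le> 18 * (2 * Rr)^2 * (12/10 / Rr)"
    proof -
      have "(Rr + 1)^2 \<le> (2 * Rr)^2" using R1 by (intro power_mono) auto
      moreover have "12/10 / Rr \<ge> 0" using R1 by simp
      ultimately show ?thesis by (intro mult_right_mono) auto
    qed
    also have "\<dots> = 864/10 * Rr"
    proof -
      have "Rr \<noteq> 0" using R1 by simp
      then show ?thesis by (simp add: power2_eq_square)
    qed
    also have "\<dots> \<le> 125 * (2 * Rr + 1) / 2" using R1 by simp
    finally show ?thesis by (simp add: Rr_def)
  qed
  then show ?thesis by (simp add: q_def)
qed

lemma weight_constant_bound:
  fixes R M :: nat
  assumes M: "2 \<le> M" and MR: "4 * real R ^ 2 \<le> real M - 1"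
  defines "ti \<equiv> 1 + 2 / (real M - 1)"
  defines "\<sigma> \<equiv> ti + sqrt (ti^2 - 1)"
  defines "C \<equiv> 5 * sqrt 5 * sqrt (2 * real R + 1) * sqrt (real M) / sqrt (2 * (real M - 1))"
  shows "3 * (real R + 1) * sqrt (\<sigma>^2 - 1) \<le> C * \<sigma>"
proof -
  have Mr: "real M - 1 \<ge> 1" using M by simp
  have ti: "1 < ti" using Mr by (simp add: ti_def)
  define q where "q = sqrt (ti^2 - 1)"
  have key: "18 * (real R + 1)^2 * q \<le> 125 * (2 * real R + 1) / 2"
    using grid_step_sqrt_bound[OF M MR] by (simp add: q_def ti_def)
  have q0: "q \<ge> 0" using ti by (simp add: q_def)
  have sq: "\<sigma> = ti + q" by (simp add: \<sigma>_def q_def)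
  have s1: "\<sigma> \<ge> 1" using q0 ti by (simp add: sq)
  have s2: "\<sigma>^2 - 1 = 2 * q * \<sigma>"
  proof -
    have "1 \<le> ti^2" using ti by (simp add: one_le_power)
    then have "ti^2 - 1 = q^2" by (simp add: q_def)
    then show ?thesis by (simp add: sq power2_eq_square algebra_simps)
  qed
  have C0: "C \<ge> 0" using Mr by (simp add: C_def)
  have C2: "C^2 \<ge> 125 * (2 * real R + 1) / 2"
  proof -
    have "C^2 = 125 * (2 * real R + 1) * real M / (2 * (real M - 1))"
      using Mr by (simp add: C_def power_divide power_mult_distrib real_sqrt_mult[symmetric])
    also have "\<dots> \<ge> 125 * (2 * real R + 1) / 2"
    proof -
      have "real M / (real M - 1) \<ge> 1" using Mr by simp
      then have "125 * (2 * real R + 1) / 2 * 1 \<le> 125 * (2 * real R + 1) / 2 * (real M / (real M - 1))"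
        by (intro mult_left_mono) auto
      then show ?thesis by (simp add: field_simps)
    qed
    finally show ?thesis .
  qed
  have "(3 * (real R + 1) * sqrt (\<sigma>^2 - 1))^2 = 9 * (real R + 1)^2 * (2 * q * \<sigma>)"
    using s2 q0 s1 by (simp add: power_mult_distrib power2_eq_square algebra_simps)
  also have "\<dots> = (18 * (real R + 1)^2 * q) * \<sigma>" by simp
  also have "\<dots> \<le> (125 * (2 * real R + 1) / 2) * \<sigma>" using key s1 by (intro mult_right_mono) auto
  also have "\<dots> \<le> C^2 * \<sigma>" using C2 s1 by (intro mult_right_mono) auto
  also have "\<dots> \<le> C^2 * \<sigma>^2"
  proof -
    have "\<sigma> \<le> \<sigma>^2" using s1 by (simp add: power2_eq_square)
    then show ?thesis by (intro mult_left_mono) auto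
  qed
  also have "\<dots> = (C * \<sigma>)^2" by (simp add: power_mult_distrib)
  finally have "(3 * (real R + 1) * sqrt (\<sigma>^2 - 1))^2 \<le> (C * \<sigma>)^2" .
  then show ?thesis by (rule power2_le_imp_le) (use C0 s1 in simp)
qed

lemma extrapolation_bound_rearranged:
  fixes \<kappa> \<rho> \<sigma> \<Lambda> C :: real
  assumes \<sigma>: "1 < \<sigma>" "\<sigma> < \<rho>" and \<kappa>: "0 \<le> \<kappa>"
    and \<Lambda>: "\<Lambda> \<le> 3 * (real R + 1) * \<sigma> ^ R" and C: "3 * (real R + 1) * sqrt (\<sigma>^2 - 1) \<le> C * \<sigma>"
  defines "r \<equiv> \<sigma> / \<rho>"
  shows "\<kappa> * \<rho> * (2 * (\<sigma>^Suc R / (\<rho>^Suc R * (\<rho> - \<sigma>))) + \<Lambda> * (2 / (\<rho>^Suc R * (\<rho> - 1))))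
    \<le> 2 * \<kappa> * (1 / (1 - r) + C * \<rho> / ((\<rho> - 1) * sqrt (\<rho>^2 * r^2 - 1))) * r ^ (R + 1)"
proof -
  have \<rho>: "0 < \<rho>" "0 < \<rho> - 1" using \<sigma> by auto
  have "0 < sqrt (\<sigma>^2 - 1)" using \<sigma> by (simp add: power_less_one_iff less_1_mult)
  have "\<Lambda> * sqrt (\<sigma>^2 - 1) \<le> 3 * (real R + 1) * \<sigma>^R * sqrt (\<sigma>^2 - 1)"
    using \<Lambda> \<open>0 < sqrt (\<sigma>^2 - 1)\<close> by (intro mult_right_mono) auto
  also have "\<dots> = (3 * (real R + 1) * sqrt (\<sigma>^2 - 1)) * \<sigma>^R" by (simp add: mult_ac)
  also have "\<dots> \<le> (C * \<sigma>) * \<sigma>^R" using C \<sigma> by (intro mult_right_mono) auto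
  finally have "\<Lambda> \<le> C * \<sigma>^Suc R / sqrt (\<sigma>^2 - 1)"
    using \<open>0 < sqrt (\<sigma>^2 - 1)\<close> by (simp add: le_divide_eq mult_ac)
  then have \<Lambda>: "\<Lambda> \<le> C * \<sigma>^Suc R / sqrt (\<sigma>^2 - 1)" .
  have geometric: "\<rho> * (\<sigma>^Suc R / (\<rho>^Suc R * (\<rho> - \<sigma>))) = r ^ Suc R / (1 - r)"
    using \<rho> \<sigma> by (simp add: r_def power_divide field_simps)
  have "\<rho> * (\<Lambda> * (2 / (\<rho>^Suc R * (\<rho> - 1)))) = 2 * (\<Lambda> / (\<rho>^R * (\<rho> - 1)))"
    using \<rho> by (simp add: field_simps)
  also have "\<dots> \<le> 2 * ((C * \<sigma>^Suc R / sqrt (\<sigma>^2 - 1)) / (\<rho>^R * (\<rho> - 1)))"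
    using \<Lambda> \<rho> by (intro mult_left_mono divide_right_mono) auto
  also have "\<dots> = 2 * (C * \<rho> / ((\<rho> - 1) * sqrt (\<rho>^2 * r^2 - 1)) * r ^ Suc R)"
    using \<rho> by (simp add: r_def power_divide field_simps)
  finally have lagrange: "\<rho> * (\<Lambda> * (2 / (\<rho>^Suc R * (\<rho> - 1))))
      \<le> 2 * (C * \<rho> / ((\<rho> - 1) * sqrt (\<rho>^2 * r^2 - 1)) * r ^ Suc R)" .
  have "\<kappa> * \<rho> * (2 * (\<sigma>^Suc R / (\<rho>^Suc R * (\<rho> - \<sigma>))) + \<Lambda> * (2 / (\<rho>^Suc R * (\<rho> - 1))))
      = \<kappa> * (2 * (\<rho> * (\<sigma>^Suc R / (\<rho>^Suc R * (\<rho> - \<sigma>)))) + \<rho> * (\<Lambda> * (2 / (\<rho>^Suc R * (\<rho> - 1)))))"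
    by (simp add: algebra_simps)
  also have "\<dots> \<le> \<kappa> * (2 * (r ^ Suc R / (1 - r))
      + 2 * (C * \<rho> / ((\<rho> - 1) * sqrt (\<rho>^2 * r^2 - 1)) * r ^ Suc R))"
    unfolding geometric using lagrange \<kappa> by (intro mult_left_mono add_left_mono) auto
  also have "\<dots> = 2 * \<kappa> * (1 / (1 - r) + C * \<rho> / ((\<rho> - 1) * sqrt (\<rho>^2 * r^2 - 1))) * r ^ (R + 1)"
    by (simp add: algebra_simps)
  finally show ?thesis .
qed

lemma matrix_solution_regular:
  fixes A :: "complex \<Rightarrow> complex^'n^'n" and b :: "complex \<Rightarrow> complex^'n"
  assumes A_cont: "continuous_on (bernstein_ellipse_closed \<rho>) A"
    and b_cont: "continuous_on (bernstein_ellipse_closed \<rho>) b"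
    and A_an: "\<And>i j. (\<lambda>t. A t $ i $ j) analytic_on bernstein_ellipse \<rho>"
    and b_an: "\<And>i. (\<lambda>t. b t $ i) analytic_on bernstein_ellipse \<rho>"
    and A_inv: "\<And>t. t \<in> bernstein_ellipse_closed \<rho> \<Longrightarrow> invertible (A t)"
  shows "continuous_on (bernstein_ellipse_closed \<rho>) (\<lambda>t. matrix_inv (A t) *v b t)"
    and "(\<lambda>t. (matrix_inv (A t) *v b t) $ k) holomorphic_on bernstein_ellipse \<rho>"
proof -
  show "continuous_on (bernstein_ellipse_closed \<rho>) (\<lambda>t. matrix_inv (A t) *v b t)"
    by (rule continuous_on_matrix_inv_mult_vec[OF A_cont b_cont A_inv])
  show "(\<lambda>t. (matrix_inv (A t) *v b t) $ k) holomorphic_on bernstein_ellipse \<rho>"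
  proof (rule holomorphic_on_matrix_inv_mult_vec)
    show "(\<lambda>t. A t $ i $ j) holomorphic_on bernstein_ellipse \<rho>" for i j
      using A_an analytic_imp_holomorphic by blast
    show "(\<lambda>t. b t $ i) holomorphic_on bernstein_ellipse \<rho>" for i
      using b_an analytic_imp_holomorphic by blast
    show "invertible (A t)" if "t \<in> bernstein_ellipse \<rho>" for t
      using A_inv that bernstein_ellipse_subset_closed by blast
  qed
qed

lemma equispaced_extrapolation_error:
  fixes X :: "complex \<Rightarrow> complex^'n" and M R :: nat
  assumes rho: "1 < \<rho>"
    and cont: "continuous_on (bernstein_ellipse_closed \<rho>) X"
    and hol: "\<And>i. (\<lambda>t. X t $ i) holomorphic_on bernstein_ellipse \<rho>"
    and M: "2 \<le> M" and MR: "4 * real R ^ 2 \<le> real M - 1"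
  defines "ti \<equiv> 1 + 2 / (real M - 1)"
  defines "\<sigma> \<equiv> ti + sqrt (ti^2 - 1)"
  defines "\<kappa> \<equiv> Sup ((\<lambda>t. norm (X t)) ` bernstein_ellipse_boundary \<rho>)"
  defines "C \<equiv> 5 * sqrt 5 * sqrt (2 * real R + 1) * sqrt (real M) / sqrt (2 * (real M - 1))"
  assumes \<sigma>\<rho>: "\<sigma> < \<rho>"
  obtains S c where "S \<subseteq> grid_point M ` {..<M}" "finite S"
    "norm (X (of_real ti) - (\<Sum>x\<in>S. of_real (c x) *s X (of_real x)))
      \<le> 2 * \<kappa> * (1 / (1 - \<sigma>/\<rho>) + C * \<rho> / ((\<rho> - 1) * sqrt (\<rho>^2 * (\<sigma>/\<rho>)^2 - 1))) * (\<sigma>/\<rho>) ^ (R + 1)"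
proof -
  have ti: "1 < ti" using M by (simp add: ti_def)
  note \<sigma> = joukowski_real_preimage[OF ti, folded \<sigma>_def]
  have "focal_sum (of_real ti) \<le> \<sigma> + 1/\<sigma>" using ti \<sigma>(2) by (simp add: focal_sum_of_real)
  then obtain S c where S: "S \<subseteq> grid_point M ` {..<M}" "finite S"
    and exact: "\<And>p. degree p \<le> R \<Longrightarrow> (\<Sum>x\<in>S. c x * poly p x) = poly p ti"
    and \<Lambda>: "(\<Sum>x\<in>S. \<bar>c x\<bar>) \<le> 3 * (real R + 1) * \<sigma> ^ R"
    by (rule fekete_extrapolation_weights[OF M MR less_imp_le[OF \<sigma>(1)]]) blast
  have "continuous_on (bernstein_ellipse_boundary \<rho>) (\<lambda>t. norm (X t))"
    using continuous_on_subset[OF cont bernstein_ellipse_boundary_subset_closed]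
    by (rule continuous_on_norm)
  then have bound: "norm (X z) \<le> \<kappa>" if "z \<in> bernstein_ellipse_boundary \<rho>" for z
    unfolding \<kappa>_def using le_Sup_image_compact[OF compact_bernstein_ellipse_boundary _ that] by blast
  have "joukowski (of_real \<rho>) \<in> bernstein_ellipse_boundary \<rho>"
    using rho by (intro joukowski_circle_in_boundary) auto
  then have \<kappa>: "0 \<le> \<kappa>" using bound norm_ge_zero order_trans by blast
  have nodes: "S \<subseteq> {-1..1}" using S(1) grid_point_bounds[OF M] by auto
  have exact_cheb: "(\<Sum>x\<in>S. c x * poly (cheb_poly k) x) = poly (cheb_poly k) ((\<sigma> + 1/\<sigma>)/2)"
    if "k \<le> R" for k
    using exact[OF order_trans[OF degree_cheb_poly that]] \<sigma>(2) by simp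
  have "norm (X (of_real ti) - (\<Sum>x\<in>S. of_real (c x) *s X (of_real x)))
      \<le> \<kappa> * \<rho> * (2 * (\<sigma>^Suc R / (\<rho>^Suc R * (\<rho> - \<sigma>))) + (\<Sum>x\<in>S. \<bar>c x\<bar>) * (2 / (\<rho>^Suc R * (\<rho> - 1))))"
    using vector_quadrature_error_bound[OF rho cont hol bound S(2) nodes exact_cheb
        less_imp_le[OF \<sigma>(1)] \<sigma>\<rho>]
    unfolding \<sigma>(2) .
  also have "\<dots> \<le> 2 * \<kappa> * (1 / (1 - \<sigma>/\<rho>)
      + C * \<rho> / ((\<rho> - 1) * sqrt (\<rho>^2 * (\<sigma>/\<rho>)^2 - 1))) * (\<sigma>/\<rho>) ^ (R + 1)"
    by (rule extrapolation_bound_rearranged[OF \<sigma>(1) \<sigma>\<rho> \<kappa> \<Lambda>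
          weight_constant_bound[OF M MR, folded ti_def, folded \<sigma>_def C_def]])
  finally show ?thesis using that S by blast
qed

theorem theorem2:
  fixes A :: "complex \<Rightarrow> complex^'n^'n"
    and b :: "complex \<Rightarrow> complex^'n"
    and \<rho> :: real and M R :: nat
    and sstar :: "complex^'n"
  assumes rho: "\<rho> > 1"
    and A_cont: "continuous_on (bernstein_ellipse_closed \<rho>) A"
    and b_cont: "continuous_on (bernstein_ellipse_closed \<rho>) b"
    and A_an: "\<And>i j. (\<lambda>t. A t $ i $ j) analytic_on bernstein_ellipse \<rho>"
    and b_an: "\<And>i. (\<lambda>t. b t $ i) analytic_on bernstein_ellipse \<rho>"
    and A_inv: "\<And>t. t \<in> bernstein_ellipse_closed \<rho> \<Longrightarrow> invertible (A t)"
    and M: "M \<ge> 2"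
    and r_lt: "(1 + 2 / (real M - 1) + sqrt ((1 + 2 / (real M - 1))\<^sup>2 - 1)) / \<rho> < 1"
    and sstar_in: "sstar \<in> {\<Sum>j<M. c j *s (matrix_inv (A (complex_of_real (-1 + real j * (2 / (real M - 1)))))
                                     *v b (complex_of_real (-1 + real j * (2 / (real M - 1))))) | c. True}"
    and sstar_min: "\<And>s. s \<in> {\<Sum>j<M. c j *s (matrix_inv (A (complex_of_real (-1 + real j * (2 / (real M - 1)))))
                                     *v b (complex_of_real (-1 + real j * (2 / (real M - 1))))) | c. True} \<Longrightarrow>
         norm (A (complex_of_real (1 + 2 / (real M - 1))) *v sstar - b (complex_of_real (1 + 2 / (real M - 1))))
         \<le> norm (A (complex_of_real (1 + 2 / (real M - 1))) *v s - b (complex_of_real (1 + 2 / (real M - 1))))"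
    and R: "real R \<le> sqrt (real M - 1) / 2"
  shows "let ti = 1 + 2 / (real M - 1);
             r = (ti + sqrt (ti\<^sup>2 - 1)) / \<rho>;
             \<kappa> = Sup ((\<lambda>t. norm (matrix_inv (A t) *v b t)) ` bernstein_ellipse_boundary \<rho>);
             C = 5 * sqrt 5 * sqrt (2 * real R + 1) * sqrt (real M) / sqrt (2 * (real M - 1))
         in norm (A (complex_of_real ti) *v sstar - b (complex_of_real ti))
            \<le> 2 * spec_norm (A (complex_of_real ti)) * \<kappa>
              * (1 / (1 - r) + C * \<rho> / ((\<rho> - 1) * sqrt (\<rho>\<^sup>2 * r\<^sup>2 - 1))) * r ^ (R + 1)"
proof -
  define ti where "ti = 1 + 2 / (real M - 1)"
  define \<sigma> where "\<sigma> = ti + sqrt (ti\<^sup>2 - 1)"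
  define r where "r = \<sigma> / \<rho>"
  define C where "C = 5 * sqrt 5 * sqrt (2 * real R + 1) * sqrt (real M) / sqrt (2 * (real M - 1))"
  define x where "x t = matrix_inv (A t) *v b t" for t
  define \<kappa> where "\<kappa> = Sup ((\<lambda>t. norm (x t)) ` bernstein_ellipse_boundary \<rho>)"
  note x_regular = matrix_solution_regular[OF A_cont b_cont A_an b_an A_inv, folded x_def]
  have \<sigma>: "1 < \<sigma>" "(\<sigma> + 1/\<sigma>) / 2 = ti" "\<sigma> < \<rho>"
    using joukowski_real_preimage[of ti] M r_lt rho by (simp_all add: \<sigma>_def ti_def divide_less_eq)
  have "1/\<sigma> < \<rho>" using \<sigma>(1) rho less_trans[of "1/\<sigma>" 1 \<rho>] by simp
  then have "of_real ti \<in> bernstein_ellipse_closed \<rho>"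
    using joukowski_in_bernstein_ellipse[of "of_real \<sigma>" \<rho>] \<sigma> bernstein_ellipse_subset_closed
    by (auto simp: joukowski_of_real norm_divide)
  then have solves: "A (of_real ti) *v x (of_real ti) = b (of_real ti)"
    unfolding x_def by (intro matrix_inv_solves A_inv)
  have MR: "4 * real R ^ 2 \<le> real M - 1"
    using power_mono[OF R, of 2] M by (simp add: power_divide)
  obtain S c where S: "S \<subseteq> grid_point M ` {..<M}" "finite S"
    and error: "norm (x (of_real ti) - (\<Sum>t\<in>S. of_real (c t) *s x (of_real t)))
      \<le> 2 * \<kappa> * (1 / (1 - r) + C * \<rho> / ((\<rho> - 1) * sqrt (\<rho>\<^sup>2 * r\<^sup>2 - 1))) * r ^ (R + 1)"
    using equispaced_extrapolation_error[OF rho x_regular M MR, folded ti_def, folded \<sigma>_def]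
      \<sigma>(3) unfolding \<kappa>_def[symmetric] C_def[symmetric] r_def[symmetric] by blast
  have "(\<Sum>t\<in>S. of_real (c t) *s x (of_real t)) \<in> {\<Sum>j<M. d j *s x (of_real (grid_point M j)) | d. True}"
    by (rule sum_in_span_of_image[OF _ inj_on_grid_point[OF M] S(1)]) simp
  then have "norm (A (of_real ti) *v sstar - b (of_real ti))
      \<le> norm (A (of_real ti) *v (\<Sum>t\<in>S. of_real (c t) *s x (of_real t)) - b (of_real ti))"
    unfolding ti_def x_def grid_point_def by (rule sstar_min)
  also have "\<dots> \<le> spec_norm (A (of_real ti))
      * norm (x (of_real ti) - (\<Sum>t\<in>S. of_real (c t) *s x (of_real t)))"
    by (rule residual_le_spec_norm_mult_dist[OF solves])
  also have "\<dots> \<le> spec_norm (A (of_real ti))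
      * (2 * \<kappa> * (1 / (1 - r) + C * \<rho> / ((\<rho> - 1) * sqrt (\<rho>\<^sup>2 * r\<^sup>2 - 1))) * r ^ (R + 1))"
    by (rule mult_left_mono[OF error spec_norm_nonneg])
  finally show ?thesis
    unfolding Let_def x_def[symmetric] \<kappa>_def[symmetric] ti_def[symmetric] \<sigma>_def[symmetric]
      r_def[symmetric] C_def[symmetric]
    by (simp only: mult.assoc mult.left_commute)
qed

end
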